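(* Let $0<\epsilon\le 1$ and $m=\log_2(1/\epsilon)$. Let $O$ be an oracle (a unitary), and let $\mathcal{A}_1^O,\dots,\mathcal{A}_N^O$ be $l$-qubit oracular quantum algorithms, each making exactly $k$ calls to $O$. Let $\gamma^1,\dots,\gamma^N\in\{0,1\}^l$ be basis states, and suppose the reflections $S_{\gamma^y}=\mathcal{I}-2|\gamma^y\rangle\langle\gamma^y|$ are available. Then there is a quantum algorithm (called \textsc{MDistAEAlgo}) that makes $O(k/\epsilon)$ queries to $O$ and, given any initial state $\sum_y \alpha_y |y\rangle|0^l\rangle|0^m\rangle$, with probability at least $8/\pi^2$ outputs a state of the form $\sum_y \alpha_y |y\rangle|\xi_y\rangle|\tilde{\beta}_{y\gamma^y}\rangle$, where for each $y$ the value $\sin^2\!\big(\tilde{\beta}_{y\gamma^y}\pi/2^m\big)$ is an $O(\epsilon)$-additive estimate of $|\langle\gamma^y|\mathcal{A}_y^O|0^l\rangle|^2$.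
   Context: The register $|y\rangle$ ranges over $y\in\{1,\dots,N\}$ (encoded in $\log N$ qubits), $|\xi_y\rangle$ are some $l$-qubit states, and $\tilde\beta_{y\gamma^y}\in\{0,\dots,2^m-1\}$ is an $m$-bit integer stored in the last register. Query complexity is the total number of calls to $O$ (the algorithms may also be applied in controlled and inverted form). This is the "multidistribution amplitude estimation" task: estimating, in superposition over $y$, the probability of the basis state $|\gamma^y\rangle$ in the output state $\mathcal{A}^O_y|0^l\rangle$. *)

theory Defs
  imports "HOL-Analysis.Analysis" "Jordan_Normal_Form.Schur_Decomposition"
begin

text \<open>Hilbert space of the three registers |y>|x>|b>, y < N, x < 2^l, b < 2^m.
  Basis index of |y>|x>|b> is (y * 2^l + x) * 2^m + b.\<close>

definition dimH :: "nat \<Rightarrow> nat \<Rightarrow> nat \<Rightarrow> nat" where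
  "dimH N l m = N * 2^l * 2^m"

definition yreg :: "nat \<Rightarrow> nat \<Rightarrow> nat \<Rightarrow> nat" where
  "yreg l m i = i div 2^m div 2^l"

definition xreg :: "nat \<Rightarrow> nat \<Rightarrow> nat \<Rightarrow> nat" where
  "xreg l m i = (i div 2^m) mod 2^l"

definition breg :: "nat \<Rightarrow> nat \<Rightarrow> nat" where
  "breg m i = i mod 2^m"

definition unitary_mat :: "nat \<Rightarrow> complex mat \<Rightarrow> bool" where
  "unitary_mat n U \<longleftrightarrow> U \<in> carrier_mat n n \<and> U * mat_adjoint U = 1\<^sub>m n
      \<and> mat_adjoint U * U = 1\<^sub>m n"

fun oracle_alg :: "complex mat \<Rightarrow> (nat \<Rightarrow> complex mat) \<Rightarrow> nat \<Rightarrow> complex mat" where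
  "oracle_alg Orc U 0 = U 0"
| "oracle_alg Orc U (Suc i) = U (Suc i) * (Orc * oracle_alg Orc U i)"

definition refl_mat :: "nat \<Rightarrow> nat \<Rightarrow> complex mat" where
  "refl_mat l g = mat (2^l) (2^l) (\<lambda>(i,j). if i = j then (if i = g then -1 else 1) else 0)"

text \<open>Control condition: None = uncontrolled, Some j = controlled on qubit j of the
  last (m-qubit) register.\<close>
definition ctrl_ok :: "nat option \<Rightarrow> nat \<Rightarrow> bool" where
  "ctrl_ok c b = (case c of None \<Rightarrow> True | Some j \<Rightarrow> b div 2^j mod 2 = 1)"

text \<open>(Controlled) application of sum_y |y><y| (x) G_y on the first two registers.\<close>
definition ctrl_block :: "nat \<Rightarrow> nat \<Rightarrow> nat \<Rightarrow> nat option \<Rightarrow> (nat \<Rightarrow> complex mat) \<Rightarrow> complex mat" where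
  "ctrl_block N l m c G = mat (dimH N l m) (dimH N l m) (\<lambda>(i,j).
     if yreg l m i = yreg l m j \<and> breg m i = breg m j then
       (if ctrl_ok c (breg m i) then G (yreg l m i) $$ (xreg l m i, xreg l m j)
        else (if xreg l m i = xreg l m j then 1 else 0))
     else 0)"

text \<open>Gates of the algorithm: fixed (input independent) unitaries, the (possibly
  controlled, possibly inverted) multiplexed algorithm sum_y |y><y| (x) A_y^O, each use
  costing k queries to O, and the (possibly controlled) reflections
  sum_y |y><y| (x) S_(gamma^y).\<close>
datatype gate = Fixed "complex mat" | AGate bool "nat option" | SGate "nat option"

fun gate_mat :: "nat \<Rightarrow> nat \<Rightarrow> nat \<Rightarrow> (nat \<Rightarrow> complex mat) \<Rightarrow> (nat \<Rightarrow> nat) \<Rightarrow> gate \<Rightarrow> complex mat" where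
  "gate_mat N l m A \<gamma> (Fixed U) = U"
| "gate_mat N l m A \<gamma> (AGate adj c) =
     ctrl_block N l m c (\<lambda>y. if adj then mat_adjoint (A y) else A y)"
| "gate_mat N l m A \<gamma> (SGate c) = ctrl_block N l m c (\<lambda>y. refl_mat l (\<gamma> y))"

definition valid_circuit :: "nat \<Rightarrow> nat \<Rightarrow> nat \<Rightarrow> gate list \<Rightarrow> bool" where
  "valid_circuit N l m gs \<longleftrightarrow> (\<forall>U. Fixed U \<in> set gs \<longrightarrow> unitary_mat (dimH N l m) U)"

fun is_AGate :: "gate \<Rightarrow> bool" where
  "is_AGate (AGate _ _) = True"
| "is_AGate _ = False"

definition num_queries :: "nat \<Rightarrow> gate list \<Rightarrow> nat" where
  "num_queries k gs = k * length (filter is_AGate gs)"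

definition run_circuit :: "nat \<Rightarrow> nat \<Rightarrow> nat \<Rightarrow> (nat \<Rightarrow> complex mat) \<Rightarrow> (nat \<Rightarrow> nat)
    \<Rightarrow> gate list \<Rightarrow> complex vec \<Rightarrow> complex vec" where
  "run_circuit N l m A \<gamma> gs v = foldl (\<lambda>w g. gate_mat N l m A \<gamma> g *\<^sub>v w) v gs"

definition init_state :: "nat \<Rightarrow> nat \<Rightarrow> nat \<Rightarrow> (nat \<Rightarrow> complex) \<Rightarrow> complex vec" where
  "init_state N l m \<alpha> = vec (dimH N l m)
     (\<lambda>i. if xreg l m i = 0 \<and> breg m i = 0 then \<alpha> (yreg l m i) else 0)"

text \<open>State sum_y alpha_y |y> (x) Phi_y, with Phi_y a vector on the last two registers
  (index x * 2^m + b).\<close>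
definition out_state :: "nat \<Rightarrow> nat \<Rightarrow> nat \<Rightarrow> (nat \<Rightarrow> complex) \<Rightarrow> (nat \<Rightarrow> complex vec) \<Rightarrow> complex vec" where
  "out_state N l m \<alpha> \<Phi> = vec (dimH N l m)
     (\<lambda>i. \<alpha> (yreg l m i) * \<Phi> (yreg l m i) $ (i mod (2^l * 2^m)))"

definition prob_last :: "nat \<Rightarrow> nat \<Rightarrow> complex vec \<Rightarrow> (nat \<Rightarrow> bool) \<Rightarrow> real" where
  "prob_last l m \<Phi> P = (\<Sum>i<2^l * 2^m. if P (i mod 2^m) then (cmod (\<Phi> $ i))\<^sup>2 else 0)"

end

theory Submission
  imports Defs
begin

text \<open>The circuit is phase estimation, run in superposition over \<open>y\<close>. The second register is
  prepared in \<open>\<psi>\<^sub>y = A\<^sub>y|0\<rangle>\<close>, and the Grover iterate \<open>G\<^sub>y = (2|\<psi>\<^sub>y\<rangle>\<langle>\<psi>\<^sub>y| - I) S\<^sub>\<gamma>\<close> is applied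
  \<open>2^j\<close> times controlled on bit \<open>j\<close> of an \<open>m\<close>-qubit register in uniform superposition, followed by
  an inverse Fourier transform of that register; this uses \<open>2^(m+1) - 1\<close> calls of \<open>A\<^sub>y\<close>, i.e.
  \<open>O(k/\<epsilon>)\<close> queries. On the plane spanned by the component of \<open>\<psi>\<^sub>y\<close> along \<open>|\<gamma>\<rangle>\<close> and the rest,
  \<open>G\<^sub>y\<close> is a rotation by \<open>2\<theta>\<close> with \<open>sin\<^sup>2 \<theta> = |\<langle>\<gamma>|\<psi>\<^sub>y\<rangle>|\<^sup>2\<close>, so the outcome \<open>b\<close> has probability
  \<open>(F(\<theta>/\<pi> - b/M) + F(-\<theta>/\<pi> - b/M))/2\<close>, where \<open>M = 2^m\<close> and \<open>F\<close> is the normalised Fejer kernel.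
  \<open>F\<close> sums to \<open>1\<close> over the grid \<open>b/M\<close> and decays like \<open>1/(M d)\<^sup>2\<close>, so with probability at
  least \<open>17/19 \<ge> 8/\<pi>\<^sup>2\<close> the outcome is within \<open>20\<close> of \<open>\<plusminus>M\<theta>/\<pi>\<close> modulo \<open>M\<close>; then
  \<open>sin\<^sup>2 (b\<pi>/M)\<close> is within \<open>20\<pi>/M \<le> 80\<epsilon>\<close> of \<open>sin\<^sup>2 \<theta>\<close>.\<close>

section \<open>Index arithmetic of the three registers\<close>

lemma sum_lessThan_mult:
  fixes f :: "nat \<Rightarrow> 'a::comm_monoid_add"
  shows "(\<Sum>i<a * b. f i) = (\<Sum>q<a. \<Sum>r<b. f (q * b + r))"
  by (simp add: sum.nat_group[symmetric] sum.atLeastLessThan_shift_0 atLeast0LessThan add.commute)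

lemma index_pair_less:
  fixes x b a c :: nat
  assumes "x < a" "b < c"
  shows "x * c + b < a * c"
proof -
  have "x * c + b < (x + 1) * c"
    using assms(2) by simp
  also have "\<dots> \<le> a * c"
    using assms(1) by (intro mult_right_mono) auto
  finally show ?thesis .
qed

lemma sum_dimH:
  "(\<Sum>i<dimH N l m. f i) = (\<Sum>y<N. \<Sum>x<2^l. \<Sum>b<2^m. f ((y * 2^l + x) * 2^m + b))"
  unfolding dimH_def sum_lessThan_mult by simp

lemma regs_index [simp]:
  assumes "x < 2^l" "b < 2^m"
  shows "yreg l m ((y * 2^l + x) * 2^m + b) = y"
    and "xreg l m ((y * 2^l + x) * 2^m + b) = x"
    and "breg m ((y * 2^l + x) * 2^m + b) = b"
  using assms by (auto simp: yreg_def xreg_def breg_def)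

lemma regs_less:
  assumes "i < dimH N l m"
  shows "yreg l m i < N" "xreg l m i < 2^l" "breg m i < 2^m"
proof -
  have "i div 2^m < N * 2^l"
    using assms unfolding dimH_def by (simp add: less_mult_imp_div_less)
  then show "yreg l m i < N"
    unfolding yreg_def by (simp add: less_mult_imp_div_less)
qed (auto simp: xreg_def breg_def)

lemma index_regs: "(yreg l m i * 2^l + xreg l m i) * 2^m + breg m i = i"
  unfolding yreg_def xreg_def breg_def by (metis div_mult_mod_eq mult.commute)

lemma regs_eq_iff:
  "i = j \<longleftrightarrow> yreg l m i = yreg l m j \<and> xreg l m i = xreg l m j \<and> breg m i = breg m j"
  by (metis index_regs)

lemma sum_dimH_fix_yb:
  assumes "y < N" "b < 2^m"
  shows "(\<Sum>j<dimH N l m. if yreg l m j = y \<and> breg m j = b then g (xreg l m j) else 0)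
    = (\<Sum>x<2^l. g x)"
proof -
  have "(\<Sum>j<dimH N l m. if yreg l m j = y \<and> breg m j = b then g (xreg l m j) else 0)
      = (\<Sum>y'<N. \<Sum>x<2^l. \<Sum>b'<2^m. if y' = y then if b' = b then g x else 0 else 0)"
    unfolding sum_dimH by (intro sum.cong refl) auto
  also have "\<dots> = (\<Sum>y'<N. if y' = y then \<Sum>x<2^l. g x else 0)"
    using assms by (intro sum.cong refl) auto
  finally show ?thesis
    using assms by simp
qed

lemma sum_dimH_fix_yx:
  assumes "y < N" "x < 2^l"
  shows "(\<Sum>j<dimH N l m. if yreg l m j = y \<and> xreg l m j = x then g (breg m j) else 0)
    = (\<Sum>b<2^m. g b)"
proof -
  have "(\<Sum>j<dimH N l m. if yreg l m j = y \<and> xreg l m j = x then g (breg m j) else 0)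
      = (\<Sum>y'<N. \<Sum>x'<2^l. if y' = y \<and> x' = x then \<Sum>b<2^m. g b else 0)"
    unfolding sum_dimH by (intro sum.cong refl) auto
  also have "\<dots> = (\<Sum>y'<N. if y' = y then \<Sum>b<2^m. g b else 0)"
    using assms by (intro sum.cong refl) auto
  finally show ?thesis
    using assms by simp
qed

definition reg_vec :: "nat \<Rightarrow> nat \<Rightarrow> nat \<Rightarrow> (nat \<Rightarrow> nat \<Rightarrow> nat \<Rightarrow> complex) \<Rightarrow> complex vec" where
  "reg_vec N l m S = vec (dimH N l m) (\<lambda>i. S (yreg l m i) (xreg l m i) (breg m i))"

lemma dim_reg_vec [simp]: "dim_vec (reg_vec N l m S) = dimH N l m"
  unfolding reg_vec_def by simp

lemma index_reg_vec [simp]: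
  "i < dimH N l m \<Longrightarrow> reg_vec N l m S $ i = S (yreg l m i) (xreg l m i) (breg m i)"
  unfolding reg_vec_def by simp

lemma reg_vec_eqI:
  assumes "dim_vec v = dimH N l m"
    and "\<And>i. i < dimH N l m \<Longrightarrow> v $ i = S (yreg l m i) (xreg l m i) (breg m i)"
  shows "v = reg_vec N l m S"
  using assms by (intro eq_vecI) auto

lemma reg_vec_cong:
  assumes "\<And>y x b. y < N \<Longrightarrow> x < 2^l \<Longrightarrow> b < 2^m \<Longrightarrow> S y x b = S' y x b"
  shows "reg_vec N l m S = reg_vec N l m S'"
  using assms regs_less by (intro eq_vecI) auto

lemma init_state_eq_reg_vec:
  "init_state N l m \<alpha> = reg_vec N l m (\<lambda>y x b. if x = 0 \<and> b = 0 then \<alpha> y else 0)"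
  unfolding init_state_def by (rule reg_vec_eqI) auto

lemma out_state_eq_reg_vec:
  "out_state N l m \<alpha> \<Phi> = reg_vec N l m (\<lambda>y x b. \<alpha> y * \<Phi> y $ (x * 2^m + b))"
proof (rule reg_vec_eqI)
  fix i
  have "i mod (2^l * 2^m) = xreg l m i * 2^m + breg m i"
    unfolding xreg_def breg_def by (metis mod_mult2_eq mult.commute)
  then show "out_state N l m \<alpha> \<Phi> $ i = \<alpha> (yreg l m i) * \<Phi> (yreg l m i) $ (xreg l m i * 2^m + breg m i)"
    if "i < dimH N l m" using that by (simp add: out_state_def)
qed (simp add: out_state_def)

section \<open>Unitary matrices\<close>

lemma mat_adjoint_dims [simp]:
  "dim_row (mat_adjoint A) = dim_col A" "dim_col (mat_adjoint A) = dim_row A"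
  unfolding mat_adjoint_def by auto

lemma mat_adjoint_index [simp]:
  "i < dim_col A \<Longrightarrow> j < dim_row A \<Longrightarrow> mat_adjoint A $$ (i, j) = cnj (A $$ (j, i))"
  unfolding mat_adjoint_def by (simp add: mat_of_rows_def)

lemma mat_adjoint_adjoint [simp]: "mat_adjoint (mat_adjoint (A :: complex mat)) = A"
  by (rule eq_matI) auto

lemma index_mult_mat_sum:
  assumes "dim_col A = n" "dim_row B = n" "i < dim_row A" "j < dim_col B"
  shows "(A * B) $$ (i, j) = (\<Sum>k<n. A $$ (i, k) * B $$ (k, j))"
  using assms by (simp add: scalar_prod_def atLeast0LessThan)

lemma index_mult_mat_vec_sum:
  assumes "dim_col A = n" "dim_vec v = n" "i < dim_row A"
  shows "(A *\<^sub>v v) $ i = (\<Sum>j<n. A $$ (i, j) * v $ j)"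
  using assms by (simp add: scalar_prod_def atLeast0LessThan)

lemma mat_adjoint_mult:
  fixes A B :: "complex mat"
  assumes "A \<in> carrier_mat n n" "B \<in> carrier_mat n n"
  shows "mat_adjoint (A * B) = mat_adjoint B * mat_adjoint A"
proof (rule eq_matI)
  fix i j assume "i < dim_row (mat_adjoint B * mat_adjoint A)" "j < dim_col (mat_adjoint B * mat_adjoint A)"
  with assms have "i < n" "j < n" by auto
  with assms have "mat_adjoint (A * B) $$ (i, j) = cnj ((A * B) $$ (j, i))"
    by simp
  also have "\<dots> = cnj (\<Sum>k<n. A $$ (j, k) * B $$ (k, i))"
    using assms \<open>i < n\<close> \<open>j < n\<close> by (subst index_mult_mat_sum[of _ n]) auto
  also have "\<dots> = (\<Sum>k<n. mat_adjoint B $$ (i, k) * mat_adjoint A $$ (k, j))"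
    using assms \<open>i < n\<close> \<open>j < n\<close> by (simp add: cnj_sum mult.commute)
  also have "\<dots> = (mat_adjoint B * mat_adjoint A) $$ (i, j)"
    using assms \<open>i < n\<close> \<open>j < n\<close> by (subst index_mult_mat_sum[of _ n]) auto
  finally show "mat_adjoint (A * B) $$ (i, j) = (mat_adjoint B * mat_adjoint A) $$ (i, j)" .
qed (use assms in auto)

lemma unitary_mat_carrier: "unitary_mat n A \<Longrightarrow> A \<in> carrier_mat n n"
  unfolding unitary_mat_def by auto

lemma unitary_mat_adjoint: "unitary_mat n A \<Longrightarrow> unitary_mat n (mat_adjoint A)"
  unfolding unitary_mat_def by auto

lemma mat_adjoint_one [simp]: "mat_adjoint (1\<^sub>m n :: complex mat) = 1\<^sub>m n"
  by (rule eq_matI) auto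

lemma unitary_mat_one: "unitary_mat n (1\<^sub>m n)"
  unfolding unitary_mat_def by simp

lemma unitary_mat_mult:
  assumes "unitary_mat n A" "unitary_mat n B"
  shows "unitary_mat n (A * B)"
proof -
  have A: "A \<in> carrier_mat n n" and B: "B \<in> carrier_mat n n"
    using assms by (auto dest: unitary_mat_carrier)
  have A': "mat_adjoint A \<in> carrier_mat n n" and B': "mat_adjoint B \<in> carrier_mat n n"
    using A B by auto
  have "A * B * mat_adjoint (A * B) = A * (B * mat_adjoint B) * mat_adjoint A"
    using A B A' B' by (simp add: mat_adjoint_mult assoc_mult_mat[of _ n n _ n _ n])
  moreover have "mat_adjoint (A * B) * (A * B) = mat_adjoint B * (mat_adjoint A * A) * B"
    using A B A' B' by (simp add: mat_adjoint_mult assoc_mult_mat[of _ n n _ n _ n])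
  ultimately show ?thesis
    using assms A B unfolding unitary_mat_def by auto
qed

lemma unitary_mat_oracle_alg:
  assumes "unitary_mat n Orc" "\<And>i. i \<le> k \<Longrightarrow> unitary_mat n (U i)"
  shows "unitary_mat n (oracle_alg Orc U k)"
  using assms by (induction k) (auto intro: unitary_mat_mult)

lemma unitary_mat_rows:
  assumes "unitary_mat n A" "i < n" "j < n"
  shows "(\<Sum>k<n. A $$ (i, k) * cnj (A $$ (j, k))) = (if i = j then 1 else 0)"
proof -
  have "(A * mat_adjoint A) $$ (i, j) = (\<Sum>k<n. A $$ (i, k) * cnj (A $$ (j, k)))"
    using assms unitary_mat_carrier[OF assms(1)]
    by (subst index_mult_mat_sum[of _ n]) (auto intro!: sum.cong)
  then show ?thesis
    using assms unfolding unitary_mat_def by simp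
qed

lemma unitary_mat_cols:
  assumes "unitary_mat n A" "i < n" "j < n"
  shows "(\<Sum>k<n. cnj (A $$ (k, i)) * A $$ (k, j)) = (if i = j then 1 else 0)"
proof -
  have "(mat_adjoint A * A) $$ (i, j) = (\<Sum>k<n. cnj (A $$ (k, i)) * A $$ (k, j))"
    using assms unitary_mat_carrier[OF assms(1)]
    by (subst index_mult_mat_sum[of _ n]) (auto intro!: sum.cong)
  then show ?thesis
    using assms unfolding unitary_mat_def by simp
qed

lemma sum_norm_first_col:
  assumes "unitary_mat n A" "0 < n"
  shows "(\<Sum>i<n. (cmod (A $$ (i, 0)))\<^sup>2) = 1"
proof -
  have "complex_of_real (\<Sum>i<n. (cmod (A $$ (i, 0)))\<^sup>2) = (\<Sum>i<n. cnj (A $$ (i, 0)) * A $$ (i, 0))"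
    unfolding of_real_sum complex_norm_square by (simp add: mult.commute)
  also have "\<dots> = 1"
    using unitary_mat_cols[OF assms(1) assms(2) assms(2)] by simp
  finally show ?thesis
    by (simp only: of_real_eq_1_iff)
qed

lemma unitary_matI:
  assumes A: "A \<in> carrier_mat n n"
    and rows: "\<And>i j. i < n \<Longrightarrow> j < n \<Longrightarrow>
      (\<Sum>k<n. A $$ (i, k) * cnj (A $$ (j, k))) = (if i = j then 1 else 0)"
  shows "unitary_mat n A"
proof -
  have "A * mat_adjoint A = 1\<^sub>m n"
  proof (rule eq_matI)
    fix i j assume "i < dim_row (1\<^sub>m n)" "j < dim_col (1\<^sub>m n)"
    then have ij: "i < n" "j < n" by auto
    have "(A * mat_adjoint A) $$ (i, j) = (\<Sum>k<n. A $$ (i, k) * mat_adjoint A $$ (k, j))"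
      using A ij by (subst index_mult_mat_sum[of _ n]) auto
    also have "\<dots> = (\<Sum>k<n. A $$ (i, k) * cnj (A $$ (j, k)))"
      using A ij by (intro sum.cong) auto
    finally show "(A * mat_adjoint A) $$ (i, j) = 1\<^sub>m n $$ (i, j)"
      using ij rows by simp
  qed (use A in auto)
  moreover have "mat_adjoint A \<in> carrier_mat n n"
    using A by auto
  ultimately show ?thesis
    unfolding unitary_mat_def using A mat_mult_left_right_inverse[of A n "mat_adjoint A"] by auto
qed

section \<open>Operators acting on one register\<close>

definition apply_mat :: "nat \<Rightarrow> complex mat \<Rightarrow> (nat \<Rightarrow> complex) \<Rightarrow> nat \<Rightarrow> complex" where
  "apply_mat n A u i = (\<Sum>j<n. A $$ (i, j) * u j)"

lemma apply_mat_cong: "(\<And>j. j < n \<Longrightarrow> u j = v j) \<Longrightarrow> apply_mat n A u = apply_mat n A v"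
  unfolding apply_mat_def by (auto intro!: sum.cong)

lemma apply_one_mat:
  assumes "i < n"
  shows "apply_mat n (1\<^sub>m n) u i = u i"
proof -
  have "apply_mat n (1\<^sub>m n) u i = (\<Sum>j<n. if j = i then u j else 0)"
    unfolding apply_mat_def using assms by (intro sum.cong) auto
  with assms show ?thesis
    by simp
qed

lemma apply_mat_zero [simp]: "apply_mat n A (\<lambda>_. 0) = (\<lambda>_. 0)"
  by (simp add: apply_mat_def fun_eq_iff)

lemma apply_mat_basis_zero:
  assumes "0 < n"
  shows "apply_mat n A (\<lambda>j. if j = 0 then z else 0) i = A $$ (i, 0) * z"
proof -
  have "apply_mat n A (\<lambda>j. if j = 0 then z else 0) i = (\<Sum>j<n. if j = 0 then A $$ (i, 0) * z else 0)"
    unfolding apply_mat_def by (intro sum.cong) auto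
  with assms show ?thesis
    by simp
qed

definition ctrl_update :: "nat option \<Rightarrow> (nat \<Rightarrow> (nat \<Rightarrow> complex) \<Rightarrow> nat \<Rightarrow> complex)
    \<Rightarrow> (nat \<Rightarrow> nat \<Rightarrow> nat \<Rightarrow> complex) \<Rightarrow> nat \<Rightarrow> nat \<Rightarrow> nat \<Rightarrow> complex" where
  "ctrl_update c f S y x b = (if ctrl_ok c b then f y (\<lambda>x'. S y x' b) x else S y x b)"

lemma ctrl_update_ctrl_update:
  "ctrl_update c f (ctrl_update c g S) = ctrl_update c (\<lambda>y u. f y (g y u)) S"
  by (auto simp: ctrl_update_def fun_eq_iff)

lemma dim_ctrl_block [simp]:
  "dim_row (ctrl_block N l m c G) = dimH N l m" "dim_col (ctrl_block N l m c G) = dimH N l m"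
  by (simp_all add: ctrl_block_def)

lemma ctrl_block_index:
  assumes "i < dimH N l m" "j < dimH N l m"
  shows "ctrl_block N l m c G $$ (i, j) =
    (if yreg l m i = yreg l m j \<and> breg m i = breg m j
     then (if ctrl_ok c (breg m i) then G (yreg l m i) else 1\<^sub>m (2^l)) $$ (xreg l m i, xreg l m j)
     else 0)"
  using assms regs_less[OF assms(1)] regs_less[OF assms(2)] by (simp add: ctrl_block_def)

lemma ctrl_block_mult_reg_vec:
  "ctrl_block N l m c G *\<^sub>v reg_vec N l m S
    = reg_vec N l m (ctrl_update c (\<lambda>y. apply_mat (2^l) (G y)) S)"
proof (rule reg_vec_eqI)
  fix i assume i: "i < dimH N l m"
  define y x b where "y = yreg l m i" and "x = xreg l m i" and "b = breg m i"
  define K where "K = (if ctrl_ok c b then G y else 1\<^sub>m (2^l))"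
  have "(ctrl_block N l m c G *\<^sub>v reg_vec N l m S) $ i
      = (\<Sum>j<dimH N l m. if yreg l m j = y \<and> breg m j = b then K $$ (x, xreg l m j) * S y (xreg l m j) b else 0)"
    using i by (subst index_mult_mat_vec_sum[of _ "dimH N l m"])
      (auto simp: ctrl_block_index K_def y_def x_def b_def intro!: sum.cong)
  also have "\<dots> = apply_mat (2^l) K (\<lambda>x'. S y x' b) x"
    unfolding apply_mat_def using regs_less[OF i] by (intro sum_dimH_fix_yb) (auto simp: y_def b_def)
  also have "\<dots> = ctrl_update c (\<lambda>y. apply_mat (2^l) (G y)) S y x b"
    using regs_less[OF i] by (simp add: ctrl_update_def K_def apply_one_mat x_def)
  finally show "(ctrl_block N l m c G *\<^sub>v reg_vec N l m S) $ i
    = ctrl_update c (\<lambda>y. apply_mat (2^l) (G y)) S (yreg l m i) (xreg l m i) (breg m i)"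
    by (simp add: y_def x_def b_def)
qed simp

lemma unitary_mat_ctrl_block:
  assumes "\<And>y. y < N \<Longrightarrow> unitary_mat (2^l) (G y)"
  shows "unitary_mat (dimH N l m) (ctrl_block N l m c G)"
proof (rule unitary_matI)
  fix i i' assume i: "i < dimH N l m" and i': "i' < dimH N l m"
  define y x b where "y = yreg l m i" and "x = xreg l m i" and "b = breg m i"
  define K where "K = (if ctrl_ok c b then G y else 1\<^sub>m (2^l))"
  have K: "unitary_mat (2^l) K"
    using assms regs_less[OF i] by (simp add: K_def y_def unitary_mat_one)
  show "(\<Sum>j<dimH N l m. ctrl_block N l m c G $$ (i, j) * cnj (ctrl_block N l m c G $$ (i', j)))
    = (if i = i' then 1 else 0)"
  proof (cases "yreg l m i' = y \<and> breg m i' = b")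
    case True
    have "(\<Sum>j<dimH N l m. ctrl_block N l m c G $$ (i, j) * cnj (ctrl_block N l m c G $$ (i', j)))
        = (\<Sum>j<dimH N l m. if yreg l m j = y \<and> breg m j = b
             then K $$ (x, xreg l m j) * cnj (K $$ (xreg l m i', xreg l m j)) else 0)"
      using i i' True by (intro sum.cong) (auto simp: ctrl_block_index K_def y_def x_def b_def)
    also have "\<dots> = (\<Sum>x'<2^l. K $$ (x, x') * cnj (K $$ (xreg l m i', x')))"
      using regs_less[OF i] by (intro sum_dimH_fix_yb) (auto simp: y_def b_def)
    also have "\<dots> = (if i = i' then 1 else 0)"
      using True unitary_mat_rows[OF K] regs_less[OF i] regs_less[OF i'] regs_eq_iff[of i i' l m]
      by (auto simp: y_def x_def b_def)
    finally show ?thesis .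
  next
    case False
    then show ?thesis
      using i i' by (auto simp: ctrl_block_index y_def b_def intro!: sum.neutral)
  qed
qed (simp add: ctrl_block_def)

definition last_reg_mat :: "nat \<Rightarrow> nat \<Rightarrow> nat \<Rightarrow> complex mat \<Rightarrow> complex mat" where
  "last_reg_mat N l m F = mat (dimH N l m) (dimH N l m) (\<lambda>(i, j).
     if yreg l m i = yreg l m j \<and> xreg l m i = xreg l m j then F $$ (breg m i, breg m j) else 0)"

lemma dim_last_reg_mat [simp]:
  "dim_row (last_reg_mat N l m F) = dimH N l m" "dim_col (last_reg_mat N l m F) = dimH N l m"
  by (simp_all add: last_reg_mat_def)

lemma last_reg_mat_mult_reg_vec:
  "last_reg_mat N l m F *\<^sub>v reg_vec N l m S = reg_vec N l m (\<lambda>y x. apply_mat (2^m) F (S y x))"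
proof (rule reg_vec_eqI)
  fix i assume i: "i < dimH N l m"
  define y x b where "y = yreg l m i" and "x = xreg l m i" and "b = breg m i"
  have "(last_reg_mat N l m F *\<^sub>v reg_vec N l m S) $ i
      = (\<Sum>j<dimH N l m. if yreg l m j = y \<and> xreg l m j = x then F $$ (b, breg m j) * S y x (breg m j) else 0)"
    using i by (subst index_mult_mat_vec_sum[of _ "dimH N l m"])
      (auto simp: last_reg_mat_def y_def x_def b_def intro!: sum.cong)
  also have "\<dots> = apply_mat (2^m) F (S y x) b"
    unfolding apply_mat_def using regs_less[OF i] by (intro sum_dimH_fix_yx) (auto simp: y_def x_def)
  finally show "(last_reg_mat N l m F *\<^sub>v reg_vec N l m S) $ i
    = apply_mat (2^m) F (S (yreg l m i) (xreg l m i)) (breg m i)"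
    by (simp add: y_def x_def b_def)
qed simp

lemma unitary_mat_last_reg_mat:
  assumes F: "unitary_mat (2^m) F"
  shows "unitary_mat (dimH N l m) (last_reg_mat N l m F)"
proof (rule unitary_matI)
  fix i i' assume i: "i < dimH N l m" and i': "i' < dimH N l m"
  define y x b where "y = yreg l m i" and "x = xreg l m i" and "b = breg m i"
  show "(\<Sum>j<dimH N l m. last_reg_mat N l m F $$ (i, j) * cnj (last_reg_mat N l m F $$ (i', j)))
    = (if i = i' then 1 else 0)"
  proof (cases "yreg l m i' = y \<and> xreg l m i' = x")
    case True
    have "(\<Sum>j<dimH N l m. last_reg_mat N l m F $$ (i, j) * cnj (last_reg_mat N l m F $$ (i', j)))
        = (\<Sum>j<dimH N l m. if yreg l m j = y \<and> xreg l m j = x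
             then F $$ (b, breg m j) * cnj (F $$ (breg m i', breg m j)) else 0)"
      using i i' True by (intro sum.cong) (auto simp: last_reg_mat_def y_def x_def b_def)
    also have "\<dots> = (\<Sum>b'<2^m. F $$ (b, b') * cnj (F $$ (breg m i', b')))"
      using regs_less[OF i] by (intro sum_dimH_fix_yx) (auto simp: y_def x_def)
    also have "\<dots> = (if i = i' then 1 else 0)"
      using True unitary_mat_rows[OF F] regs_less[OF i] regs_less[OF i'] regs_eq_iff[of i i' l m]
      by (auto simp: y_def x_def b_def)
    finally show ?thesis .
  next
    case False
    then show ?thesis
      using i i' by (auto simp: last_reg_mat_def y_def x_def intro!: sum.neutral)
  qed
qed (simp add: last_reg_mat_def)

definition zero_flip :: "nat \<Rightarrow> complex mat" where
  "zero_flip n = mat n n (\<lambda>(i, j). if i = j then (if i = 0 then 1 else -1) else 0)"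

lemma unitary_mat_zero_flip: "unitary_mat n (zero_flip n)"
proof (rule unitary_matI)
  fix i j assume ij: "i < n" "j < n"
  then have "(\<Sum>k<n. zero_flip n $$ (i, k) * cnj (zero_flip n $$ (j, k)))
      = (\<Sum>k<n. if k = i then (if i = j then 1 else 0) else 0)"
    by (intro sum.cong) (auto simp: zero_flip_def)
  with ij show "(\<Sum>k<n. zero_flip n $$ (i, k) * cnj (zero_flip n $$ (j, k))) = (if i = j then 1 else 0)"
    by simp
qed (simp add: zero_flip_def)

lemma apply_zero_flip:
  assumes "i < n"
  shows "apply_mat n (zero_flip n) u i = (if i = 0 then u i else - u i)"
proof -
  have "apply_mat n (zero_flip n) u i = (\<Sum>j<n. if j = i then (if i = 0 then u i else - u i) else 0)"
    unfolding apply_mat_def using assms by (intro sum.cong) (auto simp: zero_flip_def)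
  with assms show ?thesis
    by simp
qed

definition reflect_at :: "nat \<Rightarrow> (nat \<Rightarrow> complex) \<Rightarrow> nat \<Rightarrow> complex" where
  "reflect_at g u x = (if x = g then - u x else u x)"

lemma apply_refl_mat:
  assumes "x < 2^l"
  shows "apply_mat (2^l) (refl_mat l g) u x = reflect_at g u x"
proof -
  have "apply_mat (2^l) (refl_mat l g) u x = (\<Sum>j<2^l. if j = x then reflect_at g u x else 0)"
    unfolding apply_mat_def using assms by (intro sum.cong) (auto simp: refl_mat_def reflect_at_def)
  with assms show ?thesis
    by simp
qed

definition inner_fun :: "nat \<Rightarrow> (nat \<Rightarrow> complex) \<Rightarrow> (nat \<Rightarrow> complex) \<Rightarrow> complex" where
  "inner_fun n v u = (\<Sum>i<n. cnj (v i) * u i)"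

lemma apply_conj_zero_flip:
  assumes A: "unitary_mat n A" and i: "i < n"
  shows "apply_mat n A (apply_mat n (zero_flip n) (apply_mat n (mat_adjoint A) v)) i
    = 2 * inner_fun n (\<lambda>j. A $$ (j, 0)) v * A $$ (i, 0) - v i"
proof -
  have n: "0 < n" using i by simp
  have Ac: "A \<in> carrier_mat n n" using unitary_mat_carrier[OF A] .
  define w where "w = apply_mat n (mat_adjoint A) v"
  have w: "w j = (\<Sum>k<n. cnj (A $$ (k, j)) * v k)" if "j < n" for j
    unfolding w_def apply_mat_def using Ac that by (intro sum.cong) auto
  have "apply_mat n A (apply_mat n (zero_flip n) w) i = (\<Sum>j<n. A $$ (i, j) * (if j = 0 then w j else - w j))"
    unfolding apply_mat_def[of n A] by (intro sum.cong) (auto simp: apply_zero_flip)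
  also have "\<dots> = 2 * (A $$ (i, 0) * w 0) - (\<Sum>j<n. A $$ (i, j) * w j)"
  proof -
    have "(\<Sum>j<n. A $$ (i, j) * (if j = 0 then w j else - w j))
        = (\<Sum>j<n. (if j = 0 then 2 * (A $$ (i, j) * w j) else 0) - A $$ (i, j) * w j)"
      by (intro sum.cong) auto
    then show ?thesis
      using n by (simp add: sum_subtractf)
  qed
  also have "(\<Sum>j<n. A $$ (i, j) * w j) = (\<Sum>j<n. \<Sum>k<n. A $$ (i, j) * cnj (A $$ (k, j)) * v k)"
    by (intro sum.cong) (simp_all add: w sum_distrib_left mult.assoc)
  also have "\<dots> = (\<Sum>k<n. (\<Sum>j<n. A $$ (i, j) * cnj (A $$ (k, j))) * v k)"
    by (subst sum.swap) (simp add: sum_distrib_right)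
  also have "\<dots> = (\<Sum>k<n. if k = i then v k else 0)"
    using unitary_mat_rows[OF A i] by (intro sum.cong) auto
  also have "w 0 = inner_fun n (\<lambda>j. A $$ (j, 0)) v"
    unfolding inner_fun_def using w[OF n] .
  finally show ?thesis
    using i unfolding w_def by (simp add: mult.commute)
qed

section \<open>The discrete Fourier transform\<close>

lemma cis_eq_1_int:
  assumes "cis a = 1"
  shows "\<exists>n::int. a = of_int n * 2 * pi"
proof -
  have "cos a = 1"
    using arg_cong[OF assms, of Re] by simp
  then show ?thesis
    using cos_one_2pi_int by auto
qed

lemma sum_cis_roots_of_unity:
  assumes M: "0 < M"
  shows "(\<Sum>b<M. cis (2 * pi * real b * of_int k / real M)) = (if int M dvd k then of_nat M else 0)"
proof -
  define z where "z = cis (2 * pi * of_int k / real M)"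
  have "cis (2 * pi * real b * of_int k / real M) = z ^ b" for b
  proof -
    have "z ^ b = cis (real b * (2 * pi * of_int k / real M))"
      unfolding z_def by (rule Complex.DeMoivre)
    then show ?thesis by (simp add: algebra_simps)
  qed
  then have sum: "(\<Sum>b<M. cis (2 * pi * real b * of_int k / real M)) = (\<Sum>b<M. z ^ b)"
    by simp
  show ?thesis
  proof (cases "int M dvd k")
    case True
    then obtain q where "k = int M * q" by blast
    then have "2 * pi * of_int k / real M = 2 * pi * of_int q"
      using M by simp
    then have "z = 1"
      unfolding z_def by (simp only:) (rule cis_multiple_2pi, simp)
    then show ?thesis using sum True by simp
  next
    case False
    have "z \<noteq> 1"
    proof
      assume "z = 1"
      then obtain n :: int where "2 * pi * of_int k / real M = of_int n * 2 * pi"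
        unfolding z_def using cis_eq_1_int by blast
      then have "of_int k = of_int n * real M" using M by (simp add: field_simps)
      then have "k = n * int M" by (metis of_int_eq_iff of_int_mult of_int_of_nat_eq)
      then show False using False by simp
    qed
    moreover have "z ^ M = 1"
      unfolding z_def Complex.DeMoivre using M by simp
    ultimately show ?thesis using sum False by (simp add: sum_gp_strict)
  qed
qed

lemma eq_if_dvd_diff:
  assumes "int M dvd (int a - int b)" "a < M" "b < M"
  shows "a = b"
proof (rule ccontr)
  assume "a \<noteq> b"
  then have "int a - int b \<noteq> 0"
    by simp
  then have "\<bar>int M\<bar> \<le> \<bar>int a - int b\<bar>"
    using assms(1) dvd_imp_le_int by blast
  then show False
    using assms(2,3) by linarith
qed

definition dft_mat :: "nat \<Rightarrow> complex mat" where
  "dft_mat M = mat M M (\<lambda>(b, c). cis (2 * pi * real b * real c / real M) / of_real (sqrt (real M)))"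

lemma dim_dft_mat [simp]: "dim_row (dft_mat M) = M" "dim_col (dft_mat M) = M"
  by (simp_all add: dft_mat_def)

lemma unitary_mat_dft:
  assumes M: "0 < M"
  shows "unitary_mat M (dft_mat M)"
proof (rule unitary_matI)
  fix b b' assume b: "b < M" and b': "b' < M"
  have sq: "of_real (sqrt (real M)) * of_real (sqrt (real M)) = (of_nat M :: complex)"
    by (simp flip: of_real_mult)
  have "(\<Sum>c<M. dft_mat M $$ (b, c) * cnj (dft_mat M $$ (b', c)))
      = (\<Sum>c<M. cis (2 * pi * real c * of_int (int b - int b') / real M) / of_nat M)"
  proof (intro sum.cong refl)
    fix c assume "c \<in> {..<M}"
    then have "dft_mat M $$ (b, c) * cnj (dft_mat M $$ (b', c))
        = cis (2 * pi * real b * real c / real M + - (2 * pi * real b' * real c / real M))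
          / (of_real (sqrt (real M)) * of_real (sqrt (real M)))"
      using b b' by (simp add: dft_mat_def cis_cnj cis_mult)
    also have "2 * pi * real b * real c / real M + - (2 * pi * real b' * real c / real M)
        = 2 * pi * real c * of_int (int b - int b') / real M"
      using M by (simp add: field_simps)
    finally show "dft_mat M $$ (b, c) * cnj (dft_mat M $$ (b', c))
        = cis (2 * pi * real c * of_int (int b - int b') / real M) / of_nat M"
      unfolding sq .
  qed
  also have "\<dots> = (if int M dvd (int b - int b') then 1 else 0)"
    unfolding sum_divide_distrib[symmetric] sum_cis_roots_of_unity[OF M] using M by simp
  also have "\<dots> = (if b = b' then 1 else 0)"
    using eq_if_dvd_diff[OF _ b b'] by auto
  finally show "(\<Sum>c<M. dft_mat M $$ (b, c) * cnj (dft_mat M $$ (b', c))) = (if b = b' then 1 else 0)" .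
qed (simp add: dft_mat_def)

lemma apply_dft_basis_zero:
  assumes "b < M"
  shows "apply_mat M (dft_mat M) (\<lambda>c. if c = 0 then z else 0) b = z / of_real (sqrt (real M))"
  using assms by (simp add: apply_mat_basis_zero dft_mat_def)

lemma apply_inverse_dft:
  assumes b: "b < M"
  shows "apply_mat M (mat_adjoint (dft_mat M)) (\<lambda>t. f t / of_real (sqrt (real M))) b
    = (\<Sum>t<M. cis (- (2 * pi * real t * real b / real M)) / of_nat M * f t)"
proof -
  have sq: "of_real (sqrt (real M)) * of_real (sqrt (real M)) = (of_nat M :: complex)"
    by (simp flip: of_real_mult)
  have "mat_adjoint (dft_mat M) $$ (b, t) * (f t / of_real (sqrt (real M)))
      = cis (- (2 * pi * real t * real b / real M)) / of_nat M * f t" if "t < M" for t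
  proof -
    have "mat_adjoint (dft_mat M) $$ (b, t) * (f t / of_real (sqrt (real M)))
        = cis (- (2 * pi * real t * real b / real M)) * f t / (of_real (sqrt (real M)) * of_real (sqrt (real M)))"
      using that b by (simp add: dft_mat_def cis_cnj)
    then show ?thesis
      unfolding sq by simp
  qed
  then show ?thesis
    unfolding apply_mat_def by (intro sum.cong) auto
qed

section \<open>The Fejer kernel\<close>

definition fejer :: "nat \<Rightarrow> real \<Rightarrow> real" where
  "fejer M d = (cmod (\<Sum>t<M. cis (2 * pi * real t * d)))\<^sup>2 / (real M)\<^sup>2"

lemma fejer_nonneg: "0 \<le> fejer M d"
  unfolding fejer_def by simp

lemma fejer_add_int: "fejer M (d + of_int n) = fejer M d"
proof -
  have "cis (2 * pi * real t * (d + of_int n)) = cis (2 * pi * real t * d)" for t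
  proof -
    have "cis (2 * pi * real t * (d + of_int n)) = cis (2 * pi * real t * d) * cis (2 * pi * (real t * of_int n))"
      by (simp add: cis_mult algebra_simps)
    then show ?thesis by simp
  qed
  then show ?thesis
    unfolding fejer_def by simp
qed

lemma norm_one_minus_cis_sq: "(cmod (1 - cis a))\<^sup>2 = 4 * (sin (a / 2))\<^sup>2"
proof -
  have "(cmod (1 - cis a))\<^sup>2 = (1 - cos a)\<^sup>2 + (sin a)\<^sup>2"
    by (simp add: cmod_power2)
  also have "\<dots> = 2 - 2 * cos a"
    using sin_cos_squared_add[of a] by (simp add: power2_eq_square algebra_simps)
  also have "cos a = 1 - 2 * (sin (a / 2))\<^sup>2"
    using cos_double_sin[of "a / 2"] by simp
  finally show ?thesis by simp
qed

lemma norm_sum_cis_le_inverse_sin: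
  assumes s: "sin (pi * d) \<noteq> 0"
  shows "cmod (\<Sum>t<M. cis (2 * pi * real t * d)) \<le> 1 / \<bar>sin (pi * d)\<bar>"
proof -
  define z where "z = cis (2 * pi * d)"
  have "cis (2 * pi * real t * d) = z ^ t" for t
  proof -
    have "z ^ t = cis (real t * (2 * pi * d))"
      unfolding z_def by (rule Complex.DeMoivre)
    then show ?thesis by (simp add: algebra_simps)
  qed
  moreover have "z \<noteq> 1"
  proof
    assume "z = 1"
    then obtain n :: int where "2 * pi * d = of_int n * 2 * pi"
      unfolding z_def using cis_eq_1_int by blast
    then have "d = of_int n" by simp
    then show False using s by (simp add: mult.commute)
  qed
  ultimately have sum: "(\<Sum>t<M. cis (2 * pi * real t * d)) = (1 - z ^ M) / (1 - z)"
    by (simp add: sum_gp_strict)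
  have num: "cmod (1 - z ^ M) \<le> 2"
    using norm_triangle_ineq4[of 1 "z ^ M"] by (simp add: z_def norm_power)
  have den: "cmod (1 - z) = 2 * \<bar>sin (pi * d)\<bar>"
  proof (rule power2_eq_imp_eq)
    show "(cmod (1 - z))\<^sup>2 = (2 * \<bar>sin (pi * d)\<bar>)\<^sup>2"
      unfolding z_def norm_one_minus_cis_sq by (simp add: power_mult_distrib)
  qed auto
  have "cmod (\<Sum>t<M. cis (2 * pi * real t * d)) \<le> 2 / (2 * \<bar>sin (pi * d)\<bar>)"
    unfolding sum norm_divide den using num s by (intro divide_right_mono) auto
  then show ?thesis
    by simp
qed

lemma fejer_le_inverse_sin_sq:
  assumes M: "0 < M" and s: "sin (pi * d) \<noteq> 0"
  shows "fejer M d \<le> 1 / ((real M)\<^sup>2 * (sin (pi * d))\<^sup>2)"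
proof -
  have "(cmod (\<Sum>t<M. cis (2 * pi * real t * d)))\<^sup>2 \<le> (1 / \<bar>sin (pi * d)\<bar>)\<^sup>2"
    using norm_sum_cis_le_inverse_sin[OF s] by (intro power_mono) auto
  then have "(cmod (\<Sum>t<M. cis (2 * pi * real t * d)))\<^sup>2 / (real M)\<^sup>2
      \<le> (1 / \<bar>sin (pi * d)\<bar>)\<^sup>2 / (real M)\<^sup>2"
    by (intro divide_right_mono) auto
  then show ?thesis
    unfolding fejer_def by (simp add: power_divide power2_abs mult.commute)
qed

lemma sin_ge_third:
  fixes t :: real
  assumes "0 \<le> t" "t \<le> 2"
  shows "t / 3 \<le> sin t"
proof -
  have "\<bar>sin t - (\<Sum>m<3. sin_coeff m * t ^ m)\<bar> \<le> inverse (fact 3) * \<bar>t\<bar> ^ 3"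
    by (rule Maclaurin_sin_bound)
  moreover have "(\<Sum>m<3. sin_coeff m * t ^ m) = t"
    by (simp add: numeral_3_eq_3 sin_coeff_def)
  moreover have "(fact 3 :: real) = 6"
    by (simp add: numeral_3_eq_3)
  ultimately have "t - t ^ 3 / 6 \<le> sin t"
    using assms by (simp add: abs_if field_simps split: if_splits)
  moreover have "t ^ 3 \<le> 4 * t"
  proof -
    have "t * t \<le> 2 * 2"
      using assms by (intro mult_mono) auto
    then have "t * (t * t) \<le> t * 4"
      using assms by (intro mult_left_mono) auto
    then show ?thesis
      by (simp add: power3_eq_cube algebra_simps)
  qed
  ultimately show ?thesis by simp
qed

lemma fejer_le_inverse_sq:
  assumes M: "0 < M" and y: "y \<noteq> 0" "\<bar>y\<bar> \<le> real M / 2"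
  shows "fejer M (y / real M) \<le> 1 / y\<^sup>2"
proof -
  define t where "t = pi * \<bar>y\<bar> / real M"
  have "pi * \<bar>y\<bar> \<le> 4 * \<bar>y\<bar>"
    using pi_less_4 by (intro mult_right_mono) auto
  then have "pi * \<bar>y\<bar> \<le> real M * 2"
    using y(2) by linarith
  then have "0 \<le> t" "t \<le> 2"
    using M by (auto simp: t_def field_simps)
  then have "t / 3 \<le> sin t"
    by (rule sin_ge_third)
  moreover have "3 * \<bar>y\<bar> \<le> pi * \<bar>y\<bar>"
    using pi_gt3 by (intro mult_right_mono) auto
  then have "\<bar>y\<bar> / real M \<le> t / 3"
    using M by (auto simp: t_def field_simps)
  ultimately have low: "\<bar>y\<bar> / real M \<le> sin t" by linarith
  have pos: "0 < \<bar>y\<bar> / real M" using y M by simp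
  have st: "(sin (pi * (y / real M)))\<^sup>2 = (sin t)\<^sup>2"
    unfolding t_def by (cases "y \<ge> 0") (auto simp: abs_if)
  then have "sin (pi * (y / real M)) \<noteq> 0"
    using low pos by auto
  then have "fejer M (y / real M) \<le> 1 / ((real M)\<^sup>2 * (sin (pi * (y / real M)))\<^sup>2)"
    by (rule fejer_le_inverse_sin_sq[OF M])
  then have "fejer M (y / real M) \<le> 1 / ((real M)\<^sup>2 * (sin t)\<^sup>2)"
    unfolding st .
  also have "\<dots> \<le> 1 / ((real M)\<^sup>2 * (\<bar>y\<bar> / real M)\<^sup>2)"
    using low pos M by (intro divide_left_mono mult_left_mono power_mono mult_pos_pos) auto
  also have "\<dots> = 1 / y\<^sup>2"
    using M by (simp add: power_divide)
  finally show ?thesis .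
qed

text \<open>Parseval's identity for the discrete Fourier transform of \<open>t \<mapsto> cis (2 * pi * t * \<phi>)\<close>.\<close>
lemma sum_fejer_grid:
  assumes M: "0 < M"
  shows "(\<Sum>b<M. fejer M (\<phi> - real b / real M)) = 1"
proof -
  define S where "S b = (\<Sum>t<M. cis (2 * pi * real t * (\<phi> - real b / real M)))" for b
  define e where "e t t' = cis (2 * pi * (real t - real t') * \<phi>)" for t t'
  define \<rho> where "\<rho> b t t' = cis (2 * pi * real b * of_int (int t' - int t) / real M)" for b t t'
  have cross: "cis (2 * pi * real t * (\<phi> - real b / real M)) * cnj (cis (2 * pi * real t' * (\<phi> - real b / real M)))
      = e t t' * \<rho> b t t'" for t t' b
  proof -
    have "2 * pi * real t * (\<phi> - real b / real M) + - (2 * pi * real t' * (\<phi> - real b / real M))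
        = 2 * pi * (real t - real t') * \<phi> + 2 * pi * real b * of_int (int t' - int t) / real M"
      using M by (simp add: field_simps)
    then show ?thesis
      unfolding e_def \<rho>_def by (simp add: cis_cnj cis_mult)
  qed
  have "complex_of_real (\<Sum>b<M. (cmod (S b))\<^sup>2) = (\<Sum>b<M. S b * cnj (S b))"
    unfolding of_real_sum complex_norm_square ..
  also have "\<dots> = (\<Sum>b<M. \<Sum>t<M. \<Sum>t'<M. e t t' * \<rho> b t t')"
    unfolding S_def cnj_sum sum_product cross ..
  also have "\<dots> = (\<Sum>t<M. \<Sum>b<M. \<Sum>t'<M. e t t' * \<rho> b t t')"
    by (rule sum.swap)
  also have "\<dots> = (\<Sum>t<M. \<Sum>t'<M. e t t' * (\<Sum>b<M. \<rho> b t t'))"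
    unfolding sum_distrib_left by (rule sum.cong[OF refl], rule sum.swap)
  also have "\<dots> = (\<Sum>t<M. \<Sum>t'<M. if t' = t then of_nat M else 0)"
    unfolding \<rho>_def sum_cis_roots_of_unity[OF M]
    by (intro sum.cong refl) (auto simp: e_def dest: eq_if_dvd_diff)
  also have "\<dots> = complex_of_real ((real M)\<^sup>2)"
    by (simp add: power2_eq_square)
  finally have "(\<Sum>b<M. (cmod (S b))\<^sup>2) = (real M)\<^sup>2"
    using of_real_eq_iff by blast
  then show ?thesis
    unfolding fejer_def S_def[symmetric] sum_divide_distrib[symmetric] using M by simp
qed

lemma inverse_sq_le_diff:
  fixes a y :: real
  assumes "1 < a" "a \<le> y"
  shows "1 / y\<^sup>2 \<le> 1 / (a - 1) - 1 / a"
proof -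
  have "a\<^sup>2 \<le> y\<^sup>2"
    using assms by (intro power_mono) auto
  then have "1 / y\<^sup>2 \<le> 1 / a\<^sup>2"
    using assms by (intro divide_left_mono mult_pos_pos) auto
  also have "\<dots> \<le> 1 / ((a - 1) * a)"
    using assms by (intro divide_left_mono) (auto simp: power2_eq_square)
  also have "\<dots> = 1 / (a - 1) - 1 / a"
    using assms by (simp add: field_simps)
  finally show ?thesis .
qed

lemma sum_inverse_sq_above:
  fixes x :: real and R :: nat
  assumes S: "finite S" and R: "2 \<le> R"
  shows "(\<Sum>k\<in>S. if x + real R < real_of_int k then 1 / (real_of_int k - x)\<^sup>2 else 0) \<le> 1 / (real R - 1)"
proof -
  define c where "c = \<lfloor>x\<rfloor> + int R + 1"
  define f where "f n = 1 / (real n + real R - 1)" for n :: nat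
  define T where "T = {k\<in>S. x + real R < real_of_int k}"
  have c_le: "c \<le> k" if "x + real R < real_of_int k" for k
    using that of_int_floor_le[of x] unfolding c_def by linarith
  have term_le: "1 / (real_of_int k - x)\<^sup>2 \<le> f (nat (k - c)) - f (Suc (nat (k - c)))"
    if "x + real R < real_of_int k" for k
  proof -
    define n where "n = nat (k - c)"
    have "real n = real_of_int k - real_of_int \<lfloor>x\<rfloor> - real R - 1"
      using c_le[OF that] unfolding n_def c_def by simp
    then have "real n + real R \<le> real_of_int k - x"
      using real_of_int_floor_add_one_gt[of x] by linarith
    then have "1 / (real_of_int k - x)\<^sup>2 \<le> 1 / (real n + real R - 1) - 1 / (real n + real R)"
      using R by (intro inverse_sq_le_diff) auto
    also have "\<dots> = f (nat (k - c)) - f (Suc (nat (k - c)))"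
      unfolding f_def n_def by simp
    finally show ?thesis .
  qed
  have "(\<Sum>k\<in>S. if x + real R < real_of_int k then 1 / (real_of_int k - x)\<^sup>2 else 0)
      = (\<Sum>k\<in>T. 1 / (real_of_int k - x)\<^sup>2)"
    unfolding T_def using S by (simp add: sum.inter_filter[symmetric])
  also have "\<dots> \<le> (\<Sum>k\<in>T. f (nat (k - c)) - f (Suc (nat (k - c))))"
    by (intro sum_mono) (auto simp: T_def term_le)
  also have "\<dots> = (\<Sum>n\<in>(\<lambda>k. nat (k - c)) ` T. f n - f (Suc n))"
    by (rule sum.reindex[symmetric, unfolded comp_def]) (auto simp: inj_on_def T_def dest!: c_le)
  also have "\<dots> \<le> (\<Sum>n<Suc (Max ((\<lambda>k. nat (k - c)) ` T)). f n - f (Suc n))"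
    using S R by (intro sum_mono2) (auto simp: T_def less_Suc_eq_le f_def divide_simps)
  also have "\<dots> = f 0 - f (Suc (Max ((\<lambda>k. nat (k - c)) ` T)))"
    by (rule sum_lessThan_telescope')
  also have "\<dots> \<le> f 0"
    using R by (simp add: f_def)
  finally show ?thesis
    by (simp add: f_def)
qed

lemma sum_inverse_sq_far:
  fixes x :: real and R :: nat
  assumes S: "finite S" and R: "2 \<le> R"
  shows "(\<Sum>k\<in>S. if real R < \<bar>x - real_of_int k\<bar> then 1 / (x - real_of_int k)\<^sup>2 else 0) \<le> 2 / (real R - 1)"
proof -
  have below: "(\<Sum>k\<in>S. if real_of_int k < x - real R then 1 / (x - real_of_int k)\<^sup>2 else 0)
      = (\<Sum>k\<in>uminus ` S. if - x + real R < real_of_int k then 1 / (real_of_int k - - x)\<^sup>2 else 0)"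
    by (subst sum.reindex) (auto simp: inj_on_def power2_commute intro!: sum.cong)
  have "(\<Sum>k\<in>S. if real R < \<bar>x - real_of_int k\<bar> then 1 / (x - real_of_int k)\<^sup>2 else 0)
      \<le> (\<Sum>k\<in>S. (if x + real R < real_of_int k then 1 / (real_of_int k - x)\<^sup>2 else 0)
              + (if real_of_int k < x - real R then 1 / (x - real_of_int k)\<^sup>2 else 0))"
    by (intro sum_mono) (auto simp: power2_commute)
  also have "\<dots> \<le> 1 / (real R - 1) + 1 / (real R - 1)"
    unfolding sum.distrib below using S R
    by (intro add_mono sum_inverse_sq_above) auto
  finally show ?thesis
    by simp
qed

lemma bij_betw_mod_window:
  assumes M: "0 < M"
  shows "bij_betw (\<lambda>k. nat (k mod int M)) {c..<c + int M} {..<M}"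
proof -
  let ?h = "\<lambda>k. nat (k mod int M)"
  have inj: "inj_on ?h {c..<c + int M}"
  proof (rule inj_onI)
    fix a b assume a: "a \<in> {c..<c + int M}" and b: "b \<in> {c..<c + int M}" and "?h a = ?h b"
    then have "a mod int M = b mod int M"
      using M by (simp add: nat_eq_iff2)
    then have "int M dvd (a - b)"
      by (simp add: mod_eq_dvd_iff)
    moreover have "\<bar>a - b\<bar> < int M"
      using a b by auto
    ultimately show "a = b"
      using dvd_imp_le_int[of "a - b" "int M"] by (cases "a = b") auto
  qed
  moreover have "?h ` {c..<c + int M} = {..<M}"
    using M card_image[OF inj] by (intro card_subset_eq) (auto simp: nat_less_iff)
  ultimately show ?thesis
    unfolding bij_betw_def by simp
qed

lemma abs_diff_le_in_window:
  assumes "k \<in> {\<lceil>x - real M / 2\<rceil>..<\<lceil>x - real M / 2\<rceil> + int M}"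
  shows "\<bar>x - real_of_int k\<bar> \<le> real M / 2"
proof -
  define c where "c = \<lceil>x - real M / 2\<rceil>"
  have "real_of_int c \<le> real_of_int k" "real_of_int k + 1 \<le> real_of_int c + real M"
    using assms unfolding c_def by simp_all
  moreover have "x - real M / 2 \<le> real_of_int c" "real_of_int c < x - real M / 2 + 1"
    unfolding c_def by linarith+
  ultimately show ?thesis
    by linarith
qed

lemma sum_fejer_far:
  fixes R :: nat
  assumes M: "0 < M" and R: "2 \<le> R" and W: "finite W"
    and window: "\<And>k. k \<in> W \<Longrightarrow> \<bar>x - real_of_int k\<bar> \<le> real M / 2"
  shows "(\<Sum>k\<in>W. if real R < \<bar>x - real_of_int k\<bar> then fejer M ((x - real_of_int k) / real M) else 0)
    \<le> 2 / (real R - 1)"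
proof -
  have "(\<Sum>k\<in>W. if real R < \<bar>x - real_of_int k\<bar> then fejer M ((x - real_of_int k) / real M) else 0)
      \<le> (\<Sum>k\<in>W. if real R < \<bar>x - real_of_int k\<bar> then 1 / (x - real_of_int k)\<^sup>2 else 0)"
    using fejer_le_inverse_sq[OF M] window R by (intro sum_mono) (auto simp del: of_int_diff)
  also have "\<dots> \<le> 2 / (real R - 1)"
    using W R by (rule sum_inverse_sq_far)
  finally show ?thesis .
qed

text \<open>The integers \<open>k\<close> are taken from a window of length \<open>M\<close> centred at \<open>M \<phi>\<close>: its
  residues mod \<open>M\<close> are all outcomes, each once, and on it the tail bound of the kernel applies.\<close>
lemma fejer_mass_near:
  fixes R :: nat
  assumes M: "0 < M" and R: "2 \<le> R"
    and near: "\<And>k::int. \<bar>real M * \<phi> - real_of_int k\<bar> \<le> real R \<Longrightarrow> P (nat (k mod int M))"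
  shows "1 - 2 / (real R - 1) \<le> (\<Sum>b<M. if P b then fejer M (\<phi> - real b / real M) else 0)"
proof -
  define x where "x = real M * \<phi>"
  define c where "c = \<lceil>x - real M / 2\<rceil>"
  define W where "W = {c..<c + int M}"
  define h where "h k = nat (k mod int M)" for k
  define E where "E k = fejer M ((x - real_of_int k) / real M)" for k
  have bij: "bij_betw h W {..<M}"
    unfolding h_def W_def by (rule bij_betw_mod_window[OF M])
  have reindex: "(\<Sum>b<M. g b) = (\<Sum>k\<in>W. g (h k))" for g :: "nat \<Rightarrow> real"
    using sum.reindex_bij_betw[OF bij, of g] by simp
  have fejer_h: "fejer M (\<phi> - real (h k) / real M) = E k" for k
  proof -
    have "real_of_int k = real M * real_of_int (k div int M) + real_of_int (k mod int M)"
      by (metis of_int_add of_int_mult of_int_of_nat_eq div_mult_mod_eq mult.commute)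
    then have "\<phi> - real (h k) / real M = (x - real_of_int k) / real M + real_of_int (k div int M)"
      using M unfolding h_def x_def by (simp add: field_simps)
    then show ?thesis
      unfolding E_def by (simp add: fejer_add_int)
  qed
  have total: "(\<Sum>k\<in>W. E k) = 1"
    using sum_fejer_grid[OF M, of \<phi>] unfolding reindex fejer_h .
  have far: "(\<Sum>k\<in>W. if real R < \<bar>x - real_of_int k\<bar> then E k else 0) \<le> 2 / (real R - 1)"
    unfolding E_def W_def c_def using M R abs_diff_le_in_window by (intro sum_fejer_far) auto
  have "(\<Sum>k\<in>W. E k - (if real R < \<bar>x - real_of_int k\<bar> then E k else 0))
      \<le> (\<Sum>k\<in>W. if P (h k) then E k else 0)"
    using near unfolding h_def x_def by (intro sum_mono) (auto simp: E_def fejer_nonneg)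
  then show ?thesis
    unfolding reindex fejer_h sum_subtractf total using far by linarith
qed

section \<open>The Grover iterate and phase estimation\<close>

definition grover_iter :: "nat \<Rightarrow> (nat \<Rightarrow> complex) \<Rightarrow> nat \<Rightarrow> (nat \<Rightarrow> complex) \<Rightarrow> nat \<Rightarrow> complex" where
  "grover_iter n \<psi> g u x = 2 * inner_fun n \<psi> (reflect_at g u) * \<psi> x - reflect_at g u x"

lemma grover_iter_power_scale:
  "(grover_iter n \<psi> g ^^ t) (\<lambda>x. c * u x) = (\<lambda>x. c * (grover_iter n \<psi> g ^^ t) u x)"
proof (induction t)
  case (Suc t)
  have reflect: "reflect_at g (\<lambda>x. c * v x) = (\<lambda>x. c * reflect_at g v x)" for v
    by (auto simp: reflect_at_def)
  have inner: "inner_fun n \<psi> (\<lambda>x. c * v x) = c * inner_fun n \<psi> v" for v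
    by (simp add: inner_fun_def sum_distrib_left mult.left_commute)
  have "grover_iter n \<psi> g (\<lambda>x. c * v x) = (\<lambda>x. c * grover_iter n \<psi> g v x)" for v
    by (rule ext) (simp add: grover_iter_def reflect inner algebra_simps)
  then show ?case
    using Suc by simp
qed simp

definition good_part :: "(nat \<Rightarrow> complex) \<Rightarrow> nat \<Rightarrow> nat \<Rightarrow> complex" where
  "good_part \<psi> g x = (if x = g then \<psi> g else 0)"

definition bad_part :: "(nat \<Rightarrow> complex) \<Rightarrow> nat \<Rightarrow> nat \<Rightarrow> complex" where
  "bad_part \<psi> g x = (if x = g then 0 else \<psi> x)"

fun grover_coeffs :: "real \<Rightarrow> nat \<Rightarrow> real \<times> real" where
  "grover_coeffs s 0 = (1, 1)"
| "grover_coeffs s (Suc t) = (let (a, b) = grover_coeffs s t in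
     ((1 - 2 * s) * a + 2 * (1 - s) * b, - 2 * s * a + (1 - 2 * s) * b))"

lemma inner_fun_good_bad:
  assumes g: "g < n" and norm: "(\<Sum>x<n. (cmod (\<psi> x))\<^sup>2) = 1"
  shows "inner_fun n \<psi> (\<lambda>x. P * good_part \<psi> g x + Q * bad_part \<psi> g x)
    = P * of_real ((cmod (\<psi> g))\<^sup>2) + Q * of_real (1 - (cmod (\<psi> g))\<^sup>2)"
proof -
  define s where "s = (cmod (\<psi> g))\<^sup>2"
  have split: "(\<Sum>x<n. f x) = f g + (\<Sum>x\<in>{..<n} - {g}. f x)" for f :: "nat \<Rightarrow> complex"
    using g by (simp add: sum.remove)
  have s: "cnj (\<psi> g) * \<psi> g = of_real s"
    unfolding s_def using complex_norm_square[of "\<psi> g"] by (simp add: mult.commute)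
  have rest: "(\<Sum>x\<in>{..<n} - {g}. cnj (\<psi> x) * \<psi> x) = of_real (1 - s)"
  proof -
    have "complex_of_real (\<Sum>x<n. (cmod (\<psi> x))\<^sup>2) = (\<Sum>x<n. cnj (\<psi> x) * \<psi> x)"
      unfolding of_real_sum complex_norm_square by (simp add: mult.commute)
    then have "(1::complex) = of_real s + (\<Sum>x\<in>{..<n} - {g}. cnj (\<psi> x) * \<psi> x)"
      unfolding norm split s by simp
    then show ?thesis
      by (simp add: algebra_simps)
  qed
  have "inner_fun n \<psi> (\<lambda>x. P * good_part \<psi> g x + Q * bad_part \<psi> g x)
      = cnj (\<psi> g) * (P * \<psi> g) + (\<Sum>x\<in>{..<n} - {g}. cnj (\<psi> x) * (Q * \<psi> x))"
    unfolding inner_fun_def split by (auto simp: good_part_def bad_part_def intro!: sum.cong)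
  also have "\<dots> = P * (cnj (\<psi> g) * \<psi> g) + Q * (\<Sum>x\<in>{..<n} - {g}. cnj (\<psi> x) * \<psi> x)"
    by (simp add: sum_distrib_left algebra_simps)
  finally show ?thesis
    unfolding s rest s_def .
qed

lemma grover_iter_power:
  assumes g: "g < n" and norm: "(\<Sum>x<n. (cmod (\<psi> x))\<^sup>2) = 1"
  defines "s \<equiv> (cmod (\<psi> g))\<^sup>2"
  shows "(grover_iter n \<psi> g ^^ t) \<psi>
    = (\<lambda>x. of_real (fst (grover_coeffs s t)) * good_part \<psi> g x + of_real (snd (grover_coeffs s t)) * bad_part \<psi> g x)"
proof (induction t)
  case 0
  show ?case by (auto simp: good_part_def bad_part_def)
next
  case (Suc t)
  obtain a b where ab: "grover_coeffs s t = (a, b)" by fastforce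
  define u where "u x = of_real a * good_part \<psi> g x + of_real b * bad_part \<psi> g x" for x
  have refl_u: "reflect_at g u = (\<lambda>x. - of_real a * good_part \<psi> g x + of_real b * bad_part \<psi> g x)"
    by (auto simp: reflect_at_def u_def good_part_def bad_part_def)
  have ip: "inner_fun n \<psi> (reflect_at g u) = - of_real a * of_real s + of_real b * of_real (1 - s)"
    unfolding refl_u inner_fun_good_bad[OF g norm] s_def ..
  have parts: "\<psi> x = good_part \<psi> g x + bad_part \<psi> g x" for x
    by (simp add: good_part_def bad_part_def)
  have "grover_iter n \<psi> g u x = of_real ((1 - 2 * s) * a + 2 * (1 - s) * b) * good_part \<psi> g x
      + of_real (- 2 * s * a + (1 - 2 * s) * b) * bad_part \<psi> g x" for x
    unfolding grover_iter_def ip by (simp add: refl_u parts[of x] algebra_simps)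
  then have "grover_iter n \<psi> g u = (\<lambda>x. of_real ((1 - 2 * s) * a + 2 * (1 - s) * b) * good_part \<psi> g x
      + of_real (- 2 * s * a + (1 - 2 * s) * b) * bad_part \<psi> g x)"
    by (rule ext)
  then show ?case
    using Suc ab by (simp add: u_def[abs_def])
qed

lemma sin_cos_arcsin_sqrt:
  assumes "0 \<le> s" "s \<le> 1"
  shows "sin (arcsin (sqrt s)) = sqrt s" "cos (arcsin (sqrt s)) = sqrt (1 - s)"
proof -
  have "sqrt s \<le> 1" "-1 \<le> sqrt s"
    using assms real_sqrt_ge_zero[of s] by (simp, linarith)
  then show "sin (arcsin (sqrt s)) = sqrt s" "cos (arcsin (sqrt s)) = sqrt (1 - s)"
    using assms by (simp_all add: sin_arcsin cos_arcsin)
qed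

lemma grover_coeffs_sin_cos:
  assumes s: "0 \<le> s" "s \<le> 1"
  defines "\<theta> \<equiv> arcsin (sqrt s)"
  shows "sqrt s * fst (grover_coeffs s t) = sin ((2 * real t + 1) * \<theta>)
    \<and> sqrt (1 - s) * snd (grover_coeffs s t) = cos ((2 * real t + 1) * \<theta>)"
proof (induction t)
  case 0
  show ?case
    using sin_cos_arcsin_sqrt[OF s] by (simp add: \<theta>_def)
next
  case (Suc t)
  obtain a b where ab: "grover_coeffs s t = (a, b)" by fastforce
  define u where "u = (2 * real t + 1) * \<theta>"
  have IH: "sqrt s * a = sin u" "sqrt (1 - s) * b = cos u"
    using Suc ab unfolding u_def by auto
  have ss: "sqrt s * sqrt s = s" and cc: "sqrt (1 - s) * sqrt (1 - s) = 1 - s"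
    using s by auto
  have sin_th: "sin \<theta> = sqrt s" and cos_th: "cos \<theta> = sqrt (1 - s)"
    using sin_cos_arcsin_sqrt[OF s] by (simp_all add: \<theta>_def)
  have cos2: "cos (2 * \<theta>) = 1 - 2 * s"
    using cos_double_sin[of \<theta>] s by (simp add: sin_th power2_eq_square)
  have sin2: "sin (2 * \<theta>) = 2 * sqrt s * sqrt (1 - s)"
    using sin_double[of \<theta>] by (simp add: sin_th cos_th)
  have "sqrt s * ((1 - 2 * s) * a + 2 * (1 - s) * b)
      = (1 - 2 * s) * (sqrt s * a) + 2 * sqrt s * sqrt (1 - s) * (sqrt (1 - s) * b)"
    using cc by (simp add: algebra_simps)
  also have "\<dots> = sin (u + 2 * \<theta>)"
    unfolding IH sin_add cos2 sin2 by (simp add: algebra_simps)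
  finally have A: "sqrt s * ((1 - 2 * s) * a + 2 * (1 - s) * b) = sin (u + 2 * \<theta>)" .
  have "sqrt (1 - s) * (- 2 * s * a + (1 - 2 * s) * b)
      = - (2 * sqrt s * sqrt (1 - s)) * (sqrt s * a) + (1 - 2 * s) * (sqrt (1 - s) * b)"
    using ss by (simp add: algebra_simps)
  also have "\<dots> = cos (u + 2 * \<theta>)"
    unfolding IH cos_add cos2 sin2 by (simp add: algebra_simps)
  finally have B: "sqrt (1 - s) * (- 2 * s * a + (1 - 2 * s) * b) = cos (u + 2 * \<theta>)" .
  have "(2 * real (Suc t) + 1) * \<theta> = u + 2 * \<theta>"
    unfolding u_def by (simp add: algebra_simps)
  then show ?case
    using A B ab by simp
qed

lemma sum_norm_good_bad:
  assumes g: "g < n" and norm: "(\<Sum>x<n. (cmod (\<psi> x))\<^sup>2) = 1"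
  shows "(\<Sum>x<n. (cmod (P * good_part \<psi> g x + Q * bad_part \<psi> g x))\<^sup>2)
    = (cmod P)\<^sup>2 * (cmod (\<psi> g))\<^sup>2 + (cmod Q)\<^sup>2 * (1 - (cmod (\<psi> g))\<^sup>2)"
proof -
  have split: "(\<Sum>x<n. f x) = f g + (\<Sum>x\<in>{..<n} - {g}. f x)" for f :: "nat \<Rightarrow> real"
    using g by (simp add: sum.remove)
  have rest: "(\<Sum>x\<in>{..<n} - {g}. (cmod (\<psi> x))\<^sup>2) = 1 - (cmod (\<psi> g))\<^sup>2"
    using norm split[of "\<lambda>x. (cmod (\<psi> x))\<^sup>2"] by simp
  have "(\<Sum>x<n. (cmod (P * good_part \<psi> g x + Q * bad_part \<psi> g x))\<^sup>2)
      = (cmod (P * \<psi> g))\<^sup>2 + (\<Sum>x\<in>{..<n} - {g}. (cmod Q)\<^sup>2 * (cmod (\<psi> x))\<^sup>2)"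
    unfolding split by (auto simp: good_part_def bad_part_def norm_mult power_mult_distrib intro!: sum.cong)
  also have "\<dots> = (cmod P)\<^sup>2 * (cmod (\<psi> g))\<^sup>2 + (cmod Q)\<^sup>2 * (1 - (cmod (\<psi> g))\<^sup>2)"
    unfolding sum_distrib_left[symmetric] rest by (simp add: norm_mult power_mult_distrib)
  finally show ?thesis .
qed

definition phase :: "real \<Rightarrow> real" where
  "phase s = arcsin (sqrt s) / pi"

lemma sin_pi_phase_sq:
  assumes "0 \<le> s" "s \<le> 1"
  shows "(sin (pi * phase s))\<^sup>2 = s"
  using sin_cos_arcsin_sqrt[OF assms] assms by (simp add: phase_def)

text \<open>Amplitude of \<open>|x\<rangle>|b\<rangle>\<close> after phase estimation of the Grover iterate \<open>G\<close> on \<open>\<psi>\<close>: the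
  inverse Fourier transform, in the last register, of \<open>\<Sum>t<M. |t\<rangle> \<otimes> G^t \<psi> / sqrt M\<close>.\<close>
definition qpe_amp :: "nat \<Rightarrow> nat \<Rightarrow> (nat \<Rightarrow> complex) \<Rightarrow> nat \<Rightarrow> nat \<Rightarrow> nat \<Rightarrow> complex" where
  "qpe_amp n M \<psi> g x b =
     (\<Sum>t<M. cis (- (2 * pi * real t * real b / real M)) / of_nat M * (grover_iter n \<psi> g ^^ t) \<psi> x)"

lemma norm_sum_cis_odd_multiples:
  assumes M: "0 < M"
  shows "(cmod (\<Sum>t<M. cis (- (2 * pi * real t * real b / real M)) / of_nat M * cis (\<sigma> * ((2 * real t + 1) * \<theta>))))\<^sup>2
    = fejer M (\<sigma> * \<theta> / pi - real b / real M)"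
proof -
  have "(\<Sum>t<M. cis (- (2 * pi * real t * real b / real M)) / of_nat M * cis (\<sigma> * ((2 * real t + 1) * \<theta>)))
      = cis (\<sigma> * \<theta>) / of_nat M * (\<Sum>t<M. cis (2 * pi * real t * (\<sigma> * \<theta> / pi - real b / real M)))"
    unfolding sum_distrib_left
  proof (intro sum.cong refl)
    fix t
    have "- (2 * pi * real t * real b / real M) + \<sigma> * ((2 * real t + 1) * \<theta>)
        = \<sigma> * \<theta> + 2 * pi * real t * (\<sigma> * \<theta> / pi - real b / real M)"
      using M by (simp add: field_simps)
    then show "cis (- (2 * pi * real t * real b / real M)) / of_nat M * cis (\<sigma> * ((2 * real t + 1) * \<theta>))
        = cis (\<sigma> * \<theta>) / of_nat M * cis (2 * pi * real t * (\<sigma> * \<theta> / pi - real b / real M))"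
      by (simp add: cis_mult)
  qed
  then show ?thesis
    unfolding fejer_def by (simp add: norm_mult norm_divide power_divide)
qed

lemma norm_sum_sin_cos_sq:
  "(cmod (\<Sum>t\<in>T. w t * of_real (sin (h t))))\<^sup>2 + (cmod (\<Sum>t\<in>T. w t * of_real (cos (h t))))\<^sup>2
   = ((cmod (\<Sum>t\<in>T. w t * cis (h t)))\<^sup>2 + (cmod (\<Sum>t\<in>T. w t * cis (- h t)))\<^sup>2) / 2"
proof -
  define A where "A = (\<Sum>t\<in>T. w t * cis (h t))"
  define B where "B = (\<Sum>t\<in>T. w t * cis (- h t))"
  have sin_cis: "of_real (sin x) = (cis x - cis (- x)) / (2 * \<i>)" for x
  proof -
    have "2 * \<i> * complex_of_real (sin x) = cis x - cis (- x)"
      by (simp add: complex_eq_iff)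
    then show ?thesis
      by (simp add: field_simps)
  qed
  have cos_cis: "of_real (cos x) = (cis x + cis (- x)) / 2" for x
  proof -
    have "2 * complex_of_real (cos x) = cis x + cis (- x)"
      by (simp add: complex_eq_iff)
    then show ?thesis
      by (simp add: field_simps)
  qed
  have "(\<Sum>t\<in>T. w t * of_real (sin (h t))) = (\<Sum>t\<in>T. (w t * cis (h t) - w t * cis (- h t)) / (2 * \<i>))"
    by (rule sum.cong) (simp_all only: sin_cis times_divide_eq_right right_diff_distrib)
  also have "\<dots> = (A - B) / (2 * \<i>)"
    unfolding A_def B_def sum_divide_distrib[symmetric] sum_subtractf ..
  finally have s: "(\<Sum>t\<in>T. w t * of_real (sin (h t))) = (A - B) / (2 * \<i>)" .
  have "(\<Sum>t\<in>T. w t * of_real (cos (h t))) = (\<Sum>t\<in>T. (w t * cis (h t) + w t * cis (- h t)) / 2)"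
    by (rule sum.cong) (simp_all only: cos_cis times_divide_eq_right distrib_left)
  also have "\<dots> = (A + B) / 2"
    unfolding A_def B_def sum_divide_distrib[symmetric] sum.distrib ..
  finally have c: "(\<Sum>t\<in>T. w t * of_real (cos (h t))) = (A + B) / 2" .
  have "(cmod (A + B))\<^sup>2 + (cmod (A - B))\<^sup>2 = 2 * (cmod A)\<^sup>2 + 2 * (cmod B)\<^sup>2"
    by (simp only: cmod_power2) (simp add: power2_eq_square algebra_simps)
  then show ?thesis
    unfolding s c A_def[symmetric] B_def[symmetric] by (simp add: norm_divide norm_mult power_divide)
qed

text \<open>On the span of the good and bad parts, the Grover iterate has eigenvalues \<open>cis (\<plusminus>2\<theta>)\<close> with
  \<open>sin \<theta> = |\<psi> g|\<close>, and \<open>\<psi>\<close> has weight \<open>1/2\<close> on each eigenvector.\<close>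
lemma sum_norm_qpe_amp:
  assumes g: "g < n" and norm: "(\<Sum>x<n. (cmod (\<psi> x))\<^sup>2) = 1" and M: "0 < M"
  defines "s \<equiv> (cmod (\<psi> g))\<^sup>2"
  shows "(\<Sum>x<n. (cmod (qpe_amp n M \<psi> g x b))\<^sup>2)
    = (fejer M (phase s - real b / real M) + fejer M (- phase s - real b / real M)) / 2"
proof -
  define w where "w t = cis (- (2 * pi * real t * real b / real M)) / of_nat M" for t
  define \<theta> where "\<theta> = arcsin (sqrt s)"
  define h where "h t = (2 * real t + 1) * \<theta>" for t
  define P where "P = (\<Sum>t<M. w t * of_real (fst (grover_coeffs s t)))"
  define Q where "Q = (\<Sum>t<M. w t * of_real (snd (grover_coeffs s t)))"
  have s: "0 \<le> s" "s \<le> 1"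
    using norm member_le_sum[of g "{..<n}" "\<lambda>x. (cmod (\<psi> x))\<^sup>2"] g unfolding s_def by auto
  have amp: "qpe_amp n M \<psi> g x b = P * good_part \<psi> g x + Q * bad_part \<psi> g x" for x
    unfolding qpe_amp_def grover_iter_power[OF g norm] s_def[symmetric] P_def Q_def w_def[symmetric]
      sum_distrib_right sum.distrib[symmetric] by (simp add: algebra_simps)
  have "(\<Sum>x<n. (cmod (qpe_amp n M \<psi> g x b))\<^sup>2)
      = (cmod (P * of_real (sqrt s)))\<^sup>2 + (cmod (Q * of_real (sqrt (1 - s))))\<^sup>2"
    unfolding amp sum_norm_good_bad[OF g norm] s_def[symmetric]
    using s by (simp add: norm_mult power_mult_distrib)
  also have "P * of_real (sqrt s) = (\<Sum>t<M. w t * of_real (sin (h t)))"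
    unfolding P_def sum_distrib_right h_def \<theta>_def using grover_coeffs_sin_cos[OF s]
    by (intro sum.cong refl) (simp add: mult.assoc mult.commute[of "fst _"] flip: of_real_mult)
  also have "Q * of_real (sqrt (1 - s)) = (\<Sum>t<M. w t * of_real (cos (h t)))"
    unfolding Q_def sum_distrib_right h_def \<theta>_def using grover_coeffs_sin_cos[OF s]
    by (intro sum.cong refl) (simp add: mult.assoc mult.commute[of "snd _"] flip: of_real_mult)
  also have "(cmod (\<Sum>t<M. w t * of_real (sin (h t))))\<^sup>2 + (cmod (\<Sum>t<M. w t * of_real (cos (h t))))\<^sup>2
      = ((cmod (\<Sum>t<M. w t * cis (1 * h t)))\<^sup>2 + (cmod (\<Sum>t<M. w t * cis (- 1 * h t)))\<^sup>2) / 2"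
    using norm_sum_sin_cos_sq[of w h] by simp
  also have "\<dots> = (fejer M (phase s - real b / real M) + fejer M (- phase s - real b / real M)) / 2"
    unfolding w_def h_def norm_sum_cis_odd_multiples[OF M] by (simp add: phase_def \<theta>_def)
  finally show ?thesis .
qed

section \<open>The estimation circuit\<close>

lemma run_circuit_Nil [simp]: "run_circuit N l m A \<gamma> [] v = v"
  unfolding run_circuit_def by simp

lemma run_circuit_Cons:
  "run_circuit N l m A \<gamma> (g # gs) v = run_circuit N l m A \<gamma> gs (gate_mat N l m A \<gamma> g *\<^sub>v v)"
  unfolding run_circuit_def by simp

lemma run_circuit_append:
  "run_circuit N l m A \<gamma> (gs @ hs) v = run_circuit N l m A \<gamma> hs (run_circuit N l m A \<gamma> gs v)"
  unfolding run_circuit_def by simp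

lemma ctrl_update_id [simp]: "ctrl_update c (\<lambda>_. id) S = S"
  by (simp add: ctrl_update_def fun_eq_iff)

lemma run_circuit_replicate:
  assumes gs: "\<And>S. run_circuit N l m A \<gamma> gs (reg_vec N l m S) = reg_vec N l m (ctrl_update c f S)"
  shows "run_circuit N l m A \<gamma> (concat (replicate n gs)) (reg_vec N l m S)
    = reg_vec N l m (ctrl_update c (\<lambda>y. f y ^^ n) S)"
proof (induction n arbitrary: S)
  case (Suc n)
  then show ?case
    by (simp add: run_circuit_append gs ctrl_update_ctrl_update funpow_swap1)
qed simp

definition flip_gate :: "nat \<Rightarrow> nat \<Rightarrow> nat \<Rightarrow> nat \<Rightarrow> gate" where
  "flip_gate N l m j = Fixed (ctrl_block N l m (Some j) (\<lambda>_. zero_flip (2^l)))"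

definition grover_block :: "nat \<Rightarrow> nat \<Rightarrow> nat \<Rightarrow> nat \<Rightarrow> gate list" where
  "grover_block N l m j = [SGate (Some j), AGate True (Some j), flip_gate N l m j, AGate False (Some j)]"

definition stage :: "nat \<Rightarrow> nat \<Rightarrow> nat \<Rightarrow> nat \<Rightarrow> gate list" where
  "stage N l m j = concat (replicate (2^j) (grover_block N l m j))"

definition stages :: "nat \<Rightarrow> nat \<Rightarrow> nat \<Rightarrow> nat \<Rightarrow> gate list" where
  "stages N l m n = concat (map (stage N l m) [0..<n])"

definition qpe_circuit :: "nat \<Rightarrow> nat \<Rightarrow> nat \<Rightarrow> gate list" where
  "qpe_circuit N l m = [Fixed (last_reg_mat N l m (dft_mat (2^m))), AGate False None]
     @ stages N l m m @ [Fixed (last_reg_mat N l m (mat_adjoint (dft_mat (2^m))))]"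

lemma run_grover_block:
  assumes A: "\<And>y. y < N \<Longrightarrow> unitary_mat (2^l) (A y)"
  shows "run_circuit N l m A \<gamma> (grover_block N l m j) (reg_vec N l m S)
    = reg_vec N l m (ctrl_update (Some j) (\<lambda>y. grover_iter (2^l) (\<lambda>x. A y $$ (x, 0)) (\<gamma> y)) S)"
proof -
  have "run_circuit N l m A \<gamma> (grover_block N l m j) (reg_vec N l m S)
      = reg_vec N l m (ctrl_update (Some j) (\<lambda>y u. apply_mat (2^l) (A y) (apply_mat (2^l) (zero_flip (2^l))
          (apply_mat (2^l) (mat_adjoint (A y)) (apply_mat (2^l) (refl_mat l (\<gamma> y)) u)))) S)"
    by (simp add: grover_block_def flip_gate_def run_circuit_def ctrl_block_mult_reg_vec ctrl_update_ctrl_update)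
  also have "\<dots> = reg_vec N l m (ctrl_update (Some j) (\<lambda>y. grover_iter (2^l) (\<lambda>x. A y $$ (x, 0)) (\<gamma> y)) S)"
  proof (rule reg_vec_cong)
    fix y x b :: nat assume y: "y < N" and x: "x < 2^l"
    have "apply_mat (2^l) (mat_adjoint (A y)) (apply_mat (2^l) (refl_mat l (\<gamma> y)) u)
        = apply_mat (2^l) (mat_adjoint (A y)) (reflect_at (\<gamma> y) u)" for u
      by (rule apply_mat_cong) (rule apply_refl_mat)
    then show "ctrl_update (Some j) (\<lambda>y u. apply_mat (2^l) (A y) (apply_mat (2^l) (zero_flip (2^l))
          (apply_mat (2^l) (mat_adjoint (A y)) (apply_mat (2^l) (refl_mat l (\<gamma> y)) u)))) S y x b
      = ctrl_update (Some j) (\<lambda>y. grover_iter (2^l) (\<lambda>x. A y $$ (x, 0)) (\<gamma> y)) S y x b"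
      using apply_conj_zero_flip[OF A[OF y] x] by (simp add: ctrl_update_def grover_iter_def)
  qed
  finally show ?thesis .
qed

lemma run_stages:
  assumes A: "\<And>y. y < N \<Longrightarrow> unitary_mat (2^l) (A y)"
  shows "run_circuit N l m A \<gamma> (stages N l m n) (reg_vec N l m (\<lambda>y x b. \<phi> y x))
    = reg_vec N l m (\<lambda>y x b. (grover_iter (2^l) (\<lambda>x. A y $$ (x, 0)) (\<gamma> y) ^^ (b mod 2^n)) (\<phi> y) x)"
proof (induction n)
  case 0
  show ?case by (simp add: stages_def)
next
  case (Suc n)
  define G where "G y = grover_iter (2^l) (\<lambda>x. A y $$ (x, 0)) (\<gamma> y)" for y
  have "run_circuit N l m A \<gamma> (stages N l m (Suc n)) (reg_vec N l m (\<lambda>y x b. \<phi> y x))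
      = run_circuit N l m A \<gamma> (stage N l m n) (reg_vec N l m (\<lambda>y x b. (G y ^^ (b mod 2^n)) (\<phi> y) x))"
    using Suc.IH by (simp add: stages_def run_circuit_append G_def)
  also have "\<dots> = reg_vec N l m (ctrl_update (Some n) (\<lambda>y. G y ^^ 2^n) (\<lambda>y x b. (G y ^^ (b mod 2^n)) (\<phi> y) x))"
    unfolding stage_def G_def by (rule run_circuit_replicate) (rule run_grover_block[OF A])
  also have "ctrl_update (Some n) (\<lambda>y. G y ^^ 2^n) (\<lambda>y x b. (G y ^^ (b mod 2^n)) (\<phi> y) x)
      = (\<lambda>y x b. (G y ^^ (b mod 2^Suc n)) (\<phi> y) x)"
  proof (intro ext)
    fix y x b :: nat
    have "b mod 2^Suc n = 2^n * (b div 2^n mod 2) + b mod 2^n"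
      by (metis mod_mult2_eq power_Suc2)
    moreover have "b div 2^n mod 2 = 0 \<or> b div 2^n mod 2 = 1"
      by auto
    ultimately show "ctrl_update (Some n) (\<lambda>y. G y ^^ 2^n) (\<lambda>y x b. (G y ^^ (b mod 2^n)) (\<phi> y) x) y x b
        = (G y ^^ (b mod 2^Suc n)) (\<phi> y) x"
      by (auto simp: ctrl_update_def ctrl_ok_def funpow_add)
  qed
  finally show ?case
    by (simp add: G_def)
qed

lemma run_qpe_preparation:
  shows "run_circuit N l m A \<gamma> [Fixed (last_reg_mat N l m (dft_mat (2^m))), AGate False None] (init_state N l m \<alpha>)
    = reg_vec N l m (\<lambda>y x b. \<alpha> y / of_real (sqrt (2^m)) * A y $$ (x, 0))"
proof -
  have "last_reg_mat N l m (dft_mat (2^m)) *\<^sub>v init_state N l m \<alpha>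
      = reg_vec N l m (\<lambda>y x b. if x = 0 then \<alpha> y / of_real (sqrt (2^m)) else 0)"
    unfolding init_state_eq_reg_vec last_reg_mat_mult_reg_vec
    by (rule reg_vec_cong) (simp add: apply_dft_basis_zero)
  moreover have "ctrl_block N l m None A *\<^sub>v reg_vec N l m (\<lambda>y x b. if x = 0 then \<alpha> y / of_real (sqrt (2^m)) else 0)
      = reg_vec N l m (\<lambda>y x b. \<alpha> y / of_real (sqrt (2^m)) * A y $$ (x, 0))"
    unfolding ctrl_block_mult_reg_vec
    by (rule reg_vec_cong) (simp add: ctrl_update_def ctrl_ok_def apply_mat_basis_zero)
  ultimately show ?thesis
    by (simp add: run_circuit_Cons)
qed

lemma run_qpe_circuit:
  assumes A: "\<And>y. y < N \<Longrightarrow> unitary_mat (2^l) (A y)"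
  shows "run_circuit N l m A \<gamma> (qpe_circuit N l m) (init_state N l m \<alpha>)
    = reg_vec N l m (\<lambda>y x b. \<alpha> y * qpe_amp (2^l) (2^m) (\<lambda>x. A y $$ (x, 0)) (\<gamma> y) x b)"
proof -
  define M :: nat where "M = 2^m"
  define c where "c y = \<alpha> y / of_real (sqrt (real M))" for y
  define G where "G y = grover_iter (2^l) (\<lambda>x. A y $$ (x, 0)) (\<gamma> y)" for y
  have "run_circuit N l m A \<gamma> [Fixed (last_reg_mat N l m (dft_mat M)), AGate False None] (init_state N l m \<alpha>)
      = reg_vec N l m (\<lambda>y x b. c y * A y $$ (x, 0))"
    unfolding run_qpe_preparation M_def c_def by simp
  moreover have "run_circuit N l m A \<gamma> (stages N l m m) (reg_vec N l m (\<lambda>y x b. c y * A y $$ (x, 0)))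
      = reg_vec N l m (\<lambda>y x b. c y * (G y ^^ b) (\<lambda>x. A y $$ (x, 0)) x)"
  proof -
    have "run_circuit N l m A \<gamma> (stages N l m m) (reg_vec N l m (\<lambda>y x b. c y * A y $$ (x, 0)))
        = reg_vec N l m (\<lambda>y x b. (G y ^^ (b mod 2^m)) (\<lambda>x. c y * A y $$ (x, 0)) x)"
      unfolding G_def by (rule run_stages[OF A])
    also have "\<dots> = reg_vec N l m (\<lambda>y x b. c y * (G y ^^ b) (\<lambda>x. A y $$ (x, 0)) x)"
      by (rule reg_vec_cong) (simp add: grover_iter_power_scale G_def)
    finally show ?thesis .
  qed
  moreover have "last_reg_mat N l m (mat_adjoint (dft_mat M))
        *\<^sub>v reg_vec N l m (\<lambda>y x b. c y * (G y ^^ b) (\<lambda>x. A y $$ (x, 0)) x)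
      = reg_vec N l m (\<lambda>y x b. \<alpha> y * qpe_amp (2^l) M (\<lambda>x. A y $$ (x, 0)) (\<gamma> y) x b)"
    unfolding last_reg_mat_mult_reg_vec M_def[symmetric]
  proof (rule reg_vec_cong)
    fix y x b :: nat assume "b < 2^m"
    then have "apply_mat M (mat_adjoint (dft_mat M)) (\<lambda>t. \<alpha> y * (G y ^^ t) (\<lambda>x. A y $$ (x, 0)) x
        / of_real (sqrt (real M))) b = \<alpha> y * qpe_amp (2^l) M (\<lambda>x. A y $$ (x, 0)) (\<gamma> y) x b"
      unfolding apply_inverse_dft[OF \<open>b < 2^m\<close>[folded M_def]] qpe_amp_def sum_distrib_left G_def
      by (simp add: algebra_simps)
    then show "apply_mat M (mat_adjoint (dft_mat M)) (\<lambda>t. c y * (G y ^^ t) (\<lambda>x. A y $$ (x, 0)) x) b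
        = \<alpha> y * qpe_amp (2^l) M (\<lambda>x. A y $$ (x, 0)) (\<gamma> y) x b"
      by (simp add: c_def)
  qed
  ultimately show ?thesis
    unfolding qpe_circuit_def run_circuit_append M_def by (simp add: run_circuit_Cons)
qed

lemma length_filter_concat_replicate:
  "length (filter P (concat (replicate n xs))) = n * length (filter P xs)"
  by (induction n) auto

lemma num_queries_qpe_circuit: "num_queries k (qpe_circuit N l m) + k = k * 2^(m + 1)"
proof -
  have "length (filter is_AGate (stages N l m n)) + 2 = 2^(n + 1)" for n
  proof (induction n)
    case (Suc n)
    have "length (filter is_AGate (stage N l m n)) = 2^n * 2"
      unfolding stage_def length_filter_concat_replicate by (simp add: grover_block_def flip_gate_def)
    then show ?case
      using Suc by (simp add: stages_def)
  qed (simp add: stages_def)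
  then have "length (filter is_AGate (qpe_circuit N l m)) + 1 = 2^(m + 1)"
    by (simp add: qpe_circuit_def)
  then show ?thesis
    unfolding num_queries_def by (metis distrib_left mult.right_neutral)
qed

lemma valid_qpe_circuit: "valid_circuit N l m (qpe_circuit N l m)"
  unfolding valid_circuit_def
proof (intro allI impI)
  fix U assume "Fixed U \<in> set (qpe_circuit N l m)"
  then consider "U = last_reg_mat N l m (dft_mat (2^m))"
    | "U = last_reg_mat N l m (mat_adjoint (dft_mat (2^m)))"
    | j where "U = ctrl_block N l m (Some j) (\<lambda>_. zero_flip (2^l))"
    by (auto simp: qpe_circuit_def stages_def stage_def grover_block_def flip_gate_def)
  then show "unitary_mat (dimH N l m) U"
    by cases (simp_all add: unitary_mat_last_reg_mat unitary_mat_adjoint unitary_mat_dft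
        unitary_mat_ctrl_block unitary_mat_zero_flip)
qed

section \<open>Query count and accuracy for precision \<open>\<epsilon>\<close>\<close>

lemma two_power_ceiling_log_bounds:
  fixes \<epsilon> :: real
  assumes "0 < \<epsilon>" "\<epsilon> \<le> 1"
  shows "1 / \<epsilon> \<le> 2 ^ nat \<lceil>log 2 (1 / \<epsilon>)\<rceil>" "2 ^ nat \<lceil>log 2 (1 / \<epsilon>)\<rceil> < 2 / \<epsilon>"
proof -
  define m where "m = nat \<lceil>log 2 (1 / \<epsilon>)\<rceil>"
  have m: "real m = of_int \<lceil>log 2 (1 / \<epsilon>)\<rceil>"
    unfolding m_def using assms by simp
  have pow: "(2::real) ^ m = 2 powr real m"
    by (simp add: powr_realpow)
  have log: "2 powr (log 2 (1 / \<epsilon>)) = 1 / \<epsilon>"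
    using assms by simp
  have "2 powr (log 2 (1 / \<epsilon>)) \<le> 2 powr real m"
    unfolding m by (intro powr_mono) auto
  then show "1 / \<epsilon> \<le> 2 ^ nat \<lceil>log 2 (1 / \<epsilon>)\<rceil>"
    unfolding m_def[symmetric] pow log .
  have "2 powr real m < 2 powr (log 2 (1 / \<epsilon>) + 1)"
    unfolding m by (intro powr_less_mono) linarith+
  also have "\<dots> = 2 / \<epsilon>"
    using log by (simp add: powr_add)
  finally show "2 ^ nat \<lceil>log 2 (1 / \<epsilon>)\<rceil> < 2 / \<epsilon>"
    unfolding m_def[symmetric] pow .
qed

lemma num_queries_qpe_circuit_le:
  fixes \<epsilon> :: real
  assumes "0 < \<epsilon>" "\<epsilon> \<le> 1"
  shows "real (num_queries k (qpe_circuit N l (nat \<lceil>log 2 (1 / \<epsilon>)\<rceil>))) \<le> 4 * real k / \<epsilon>"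
proof -
  define m where "m = nat \<lceil>log 2 (1 / \<epsilon>)\<rceil>"
  have "real (num_queries k (qpe_circuit N l m)) + real k = real k * (2 * 2 ^ m)"
    using arg_cong[OF num_queries_qpe_circuit, of real] by simp
  then have "real (num_queries k (qpe_circuit N l m)) \<le> real k * (2 * 2 ^ m)"
    by linarith
  also have "\<dots> \<le> real k * (2 * (2 / \<epsilon>))"
    using two_power_ceiling_log_bounds(2)[OF assms] unfolding m_def[symmetric]
    by (intro mult_left_mono) auto
  also have "\<dots> = 4 * real k / \<epsilon>"
    by simp
  finally show ?thesis
    unfolding m_def .
qed

lemma sin_sq_diff_int_pi:
  fixes a :: real
  shows "(sin (a - of_int q * pi))\<^sup>2 = (sin a)\<^sup>2"
proof -
  have "sin (of_int q * pi) = 0"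
    using sin_npi_int[of q] by (simp add: mult.commute)
  moreover have "(cos (of_int q * pi))\<^sup>2 = 1"
    using sin_cos_squared_add[of "of_int q * pi"] calculation by simp
  ultimately show ?thesis
    unfolding sin_diff by (simp add: power_mult_distrib)
qed

lemma abs_sin_sq_diff_le:
  fixes a c :: real
  shows "\<bar>(sin a)\<^sup>2 - (sin c)\<^sup>2\<bar> \<le> \<bar>a - c\<bar>"
proof -
  have "(sin a)\<^sup>2 - (sin c)\<^sup>2 = sin (a + c) * sin (a - c)"
  proof -
    have "sin (a + c) * sin (a - c) = (sin a * cos c)\<^sup>2 - (cos a * sin c)\<^sup>2"
      unfolding sin_add sin_diff by (simp add: power2_eq_square algebra_simps)
    also have "\<dots> = (sin a)\<^sup>2 * (1 - (sin c)\<^sup>2) - (1 - (sin a)\<^sup>2) * (sin c)\<^sup>2"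
      by (simp add: power_mult_distrib cos_squared_eq)
    finally show ?thesis
      by (simp add: algebra_simps)
  qed
  also have "\<bar>sin (a + c) * sin (a - c)\<bar> \<le> 1 * \<bar>a - c\<bar>"
    unfolding abs_mult by (intro mult_mono abs_sin_le_one abs_sin_x_le_abs_x) auto
  finally show ?thesis
    by simp
qed

lemma sin_sq_mod_near:
  assumes M: "0 < M" and k: "\<bar>x - real_of_int k\<bar> \<le> R"
  shows "\<bar>(sin (real (nat (k mod int M)) * pi / real M))\<^sup>2 - (sin (pi * x / real M))\<^sup>2\<bar> \<le> pi * R / real M"
proof -
  have "k mod int M = k - int M * (k div int M)"
    by (simp only: minus_mult_div_eq_mod)
  moreover have "real (nat (k mod int M)) = real_of_int (k mod int M)"
    using M by simp
  ultimately have mod: "real (nat (k mod int M)) = real_of_int k - real M * real_of_int (k div int M)"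
    by simp
  have "real (nat (k mod int M)) * pi / real M = pi * real_of_int k / real M - real_of_int (k div int M) * pi"
    unfolding mod using M by (simp add: field_simps)
  then have "\<bar>(sin (real (nat (k mod int M)) * pi / real M))\<^sup>2 - (sin (pi * x / real M))\<^sup>2\<bar>
      = \<bar>(sin (pi * real_of_int k / real M))\<^sup>2 - (sin (pi * x / real M))\<^sup>2\<bar>"
    by (simp only: sin_sq_diff_int_pi)
  also have "\<dots> \<le> \<bar>pi * real_of_int k / real M - pi * x / real M\<bar>"
    by (rule abs_sin_sq_diff_le)
  also have "\<dots> = pi * \<bar>x - real_of_int k\<bar> / real M"
    using M by (simp add: abs_mult abs_minus_commute diff_divide_distrib[symmetric] right_diff_distrib[symmetric])
  also have "\<dots> \<le> pi * R / real M"
    using k M by (intro divide_right_mono mult_left_mono) auto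
  finally show ?thesis .
qed

lemma prob_last_vec:
  "prob_last l m (vec (2^l * 2^m) (\<lambda>i. T (i div 2^m) (i mod 2^m))) P
    = (\<Sum>b<2^m. if P b then \<Sum>x<2^l. (cmod (T x b))\<^sup>2 else 0)"
proof -
  have "prob_last l m (vec (2^l * 2^m) (\<lambda>i. T (i div 2^m) (i mod 2^m))) P
      = (\<Sum>x<2^l. \<Sum>b<2^m. if P b then (cmod (T x b))\<^sup>2 else 0)"
    unfolding prob_last_def sum_lessThan_mult by (intro sum.cong refl) (simp add: index_pair_less)
  also have "\<dots> = (\<Sum>b<2^m. \<Sum>x<2^l. if P b then (cmod (T x b))\<^sup>2 else 0)"
    by (rule sum.swap)
  finally show ?thesis
    by (auto intro!: sum.cong)
qed

definition qpe_state :: "nat \<Rightarrow> nat \<Rightarrow> (nat \<Rightarrow> complex) \<Rightarrow> nat \<Rightarrow> complex vec" where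
  "qpe_state l m \<psi> g = vec (2^l * 2^m) (\<lambda>i. qpe_amp (2^l) (2^m) \<psi> g (i div 2^m) (i mod 2^m))"

lemma prob_last_qpe_state:
  assumes "g < 2^l" "(\<Sum>x<2^l. (cmod (\<psi> x))\<^sup>2) = 1"
  defines "\<phi> \<equiv> phase ((cmod (\<psi> g))\<^sup>2)"
  shows "prob_last l m (qpe_state l m \<psi> g) P = (\<Sum>b<2^m. if P b then
     (fejer (2^m) (\<phi> - real b / 2^m) + fejer (2^m) (- \<phi> - real b / 2^m)) / 2 else 0)"
proof -
  have M: "0 < (2::nat) ^ m"
    by simp
  show ?thesis
    unfolding qpe_state_def prob_last_vec \<phi>_def sum_norm_qpe_amp[OF assms(1,2) M] by (simp cong: if_cong)
qed

lemma prob_last_qpe_state_total: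
  assumes "g < 2^l" "(\<Sum>x<2^l. (cmod (\<psi> x))\<^sup>2) = 1"
  shows "prob_last l m (qpe_state l m \<psi> g) (\<lambda>b. True) = 1"
proof -
  have "(\<Sum>b<2^m. fejer (2^m) (\<phi> - real b / 2^m)) = 1" for \<phi>
    using sum_fejer_grid[of "2^m" \<phi>] by simp
  then show ?thesis
    unfolding prob_last_qpe_state[OF assms] by (simp add: sum.distrib flip: sum_divide_distrib)
qed

lemma prob_last_qpe_state_near:
  fixes R :: nat
  assumes g: "g < 2^l" and norm: "(\<Sum>x<2^l. (cmod (\<psi> x))\<^sup>2) = 1" and R: "2 \<le> R"
    and \<delta>: "pi * real R / 2^m \<le> \<delta>"
  shows "1 - 2 / (real R - 1)
    \<le> prob_last l m (qpe_state l m \<psi> g) (\<lambda>b. \<bar>(sin (real b * pi / 2^m))\<^sup>2 - (cmod (\<psi> g))\<^sup>2\<bar> \<le> \<delta>)"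
proof -
  define M :: nat where "M = 2^m"
  define s where "s = (cmod (\<psi> g))\<^sup>2"
  define P where "P b \<longleftrightarrow> \<bar>(sin (real b * pi / 2^m))\<^sup>2 - s\<bar> \<le> \<delta>" for b :: nat
  have M: "0 < M" and real_M: "real M = 2^m"
    unfolding M_def by simp_all
  have s: "0 \<le> s" "s \<le> 1"
    using norm member_le_sum[of g "{..<2^l}" "\<lambda>x. (cmod (\<psi> x))\<^sup>2"] g unfolding s_def by auto
  have mass: "1 - 2 / (real R - 1) \<le> (\<Sum>b<M. if P b then fejer M (\<phi> - real b / real M) else 0)"
    if "(sin (pi * \<phi>))\<^sup>2 = s" for \<phi>
  proof (rule fejer_mass_near[OF M R])
    fix k :: int assume "\<bar>real M * \<phi> - real_of_int k\<bar> \<le> real R"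
    from sin_sq_mod_near[OF M this] have "\<bar>(sin (real (nat (k mod int M)) * pi / real M))\<^sup>2 - s\<bar> \<le> pi * real R / real M"
      using M that by simp
    then show "P (nat (k mod int M))"
      using \<delta> unfolding P_def real_M by simp
  qed
  have "(sin (pi * phase s))\<^sup>2 = s" "(sin (pi * - phase s))\<^sup>2 = s"
    using sin_pi_phase_sq[OF s] by simp_all
  from this[THEN mass] have "1 - 2 / (real R - 1)
      \<le> ((\<Sum>b<M. if P b then fejer M (phase s - real b / real M) else 0)
        + (\<Sum>b<M. if P b then fejer M (- phase s - real b / real M) else 0)) / 2"
    by simp
  also have "\<dots> = (\<Sum>b<M. ((if P b then fejer M (phase s - real b / real M) else 0)
      + (if P b then fejer M (- phase s - real b / real M) else 0)) / 2)"
    by (simp only: sum_divide_distrib[symmetric] sum.distrib)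
  also have "\<dots> = prob_last l m (qpe_state l m \<psi> g) P"
    unfolding prob_last_qpe_state[OF g norm] by (intro sum.cong) (auto simp: M_def s_def)
  finally show ?thesis
    unfolding P_def s_def .
qed

lemma eight_div_pi_sq_le: "8 / pi\<^sup>2 \<le> 17 / 19"
proof -
  have "9 \<le> pi\<^sup>2"
    using pi_gt3 mult_mono[of 3 pi 3 pi] by (simp add: power2_eq_square)
  then have "8 / pi\<^sup>2 \<le> 8 / 9"
    by (intro divide_left_mono) auto
  then show ?thesis
    by simp
qed

lemma qpe_circuit_correct:
  assumes A: "\<And>y. y < N \<Longrightarrow> unitary_mat (2^l) (A y)" and \<gamma>: "\<And>y. y < N \<Longrightarrow> \<gamma> y < 2^l"
    and \<delta>: "pi * 20 / 2^m \<le> \<delta>"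
  shows "\<exists>\<Phi>. (\<forall>y<N. dim_vec (\<Phi> y) = 2^l * 2^m \<and>
             prob_last l m (\<Phi> y) (\<lambda>b. True) = 1 \<and>
             prob_last l m (\<Phi> y) (\<lambda>b. \<bar>(sin (real b * pi / 2^m))\<^sup>2 - (cmod (A y $$ (\<gamma> y, 0)))\<^sup>2\<bar> \<le> \<delta>)
               \<ge> 8 / pi\<^sup>2) \<and>
           (\<forall>\<alpha>. run_circuit N l m A \<gamma> (qpe_circuit N l m) (init_state N l m \<alpha>) = out_state N l m \<alpha> \<Phi>)"
proof (intro exI[of _ "\<lambda>y. qpe_state l m (\<lambda>x. A y $$ (x, 0)) (\<gamma> y)"] conjI allI impI)
  fix y assume y: "y < N"
  have norm: "(\<Sum>x<2^l. (cmod (A y $$ (x, 0)))\<^sup>2) = 1"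
    using sum_norm_first_col[OF A[OF y]] by simp
  show "dim_vec (qpe_state l m (\<lambda>x. A y $$ (x, 0)) (\<gamma> y)) = 2^l * 2^m"
    by (simp add: qpe_state_def)
  show "prob_last l m (qpe_state l m (\<lambda>x. A y $$ (x, 0)) (\<gamma> y)) (\<lambda>b. True) = 1"
    using prob_last_qpe_state_total[OF \<gamma>[OF y] norm] by simp
  have "17 / 19 \<le> prob_last l m (qpe_state l m (\<lambda>x. A y $$ (x, 0)) (\<gamma> y))
      (\<lambda>b. \<bar>(sin (real b * pi / 2^m))\<^sup>2 - (cmod (A y $$ (\<gamma> y, 0)))\<^sup>2\<bar> \<le> \<delta>)"
    using prob_last_qpe_state_near[OF \<gamma>[OF y] norm, of 20 m \<delta>] \<delta> by simp
  then show "prob_last l m (qpe_state l m (\<lambda>x. A y $$ (x, 0)) (\<gamma> y))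
      (\<lambda>b. \<bar>(sin (real b * pi / 2^m))\<^sup>2 - (cmod (A y $$ (\<gamma> y, 0)))\<^sup>2\<bar> \<le> \<delta>) \<ge> 8 / pi\<^sup>2"
    using eight_div_pi_sq_le by linarith
next
  fix \<alpha>
  have "run_circuit N l m A \<gamma> (qpe_circuit N l m) (init_state N l m \<alpha>)
      = reg_vec N l m (\<lambda>y x b. \<alpha> y * qpe_amp (2^l) (2^m) (\<lambda>x. A y $$ (x, 0)) (\<gamma> y) x b)"
    by (rule run_qpe_circuit[OF A])
  also have "\<dots> = out_state N l m \<alpha> (\<lambda>y. qpe_state l m (\<lambda>x. A y $$ (x, 0)) (\<gamma> y))"
    unfolding out_state_eq_reg_vec by (rule reg_vec_cong) (simp add: qpe_state_def index_pair_less)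
  finally show "run_circuit N l m A \<gamma> (qpe_circuit N l m) (init_state N l m \<alpha>)
      = out_state N l m \<alpha> (\<lambda>y. qpe_state l m (\<lambda>x. A y $$ (x, 0)) (\<gamma> y))" .
qed

theorem theorem2:
  "\<exists>C1 > 0. \<exists>C2 > 0. \<forall>(\<epsilon>::real) (N::nat) (l::nat) (k::nat).
     0 < \<epsilon> \<and> \<epsilon> \<le> 1 \<and> 1 \<le> N \<longrightarrow>
     (let m = nat \<lceil>log 2 (1 / \<epsilon>)\<rceil> in
      \<exists>gs. valid_circuit N l m gs \<and> real (num_queries k gs) \<le> C1 * real k / \<epsilon> \<and>
        (\<forall>(Orc::complex mat) (U::nat \<Rightarrow> nat \<Rightarrow> complex mat) (\<gamma>::nat \<Rightarrow> nat).
           unitary_mat (2^l) Orc \<and> (\<forall>y<N. \<forall>i\<le>k. unitary_mat (2^l) (U y i)) \<and>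
           (\<forall>y<N. \<gamma> y < 2^l) \<longrightarrow>
           (let A = (\<lambda>y. oracle_alg Orc (U y) k) in
            \<exists>\<Phi>::nat \<Rightarrow> complex vec.
              (\<forall>y<N. dim_vec (\<Phi> y) = 2^l * 2^m \<and>
                 prob_last l m (\<Phi> y) (\<lambda>b. True) = 1 \<and>
                 prob_last l m (\<Phi> y)
                   (\<lambda>b. \<bar>(sin (real b * pi / 2^m))\<^sup>2 - (cmod (A y $$ (\<gamma> y, 0)))\<^sup>2\<bar> \<le> C2 * \<epsilon>)
                   \<ge> 8 / pi\<^sup>2) \<and>
              (\<forall>\<alpha>::nat \<Rightarrow> complex.
                 run_circuit N l m A \<gamma> gs (init_state N l m \<alpha>) = out_state N l m \<alpha> \<Phi>))))"
proof (rule exI[of _ "4::real"], intro conjI exI[of _ "80::real"] allI impI, goal_cases)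
  case (3 \<epsilon> N l k)
  then have \<epsilon>: "0 < \<epsilon>" "\<epsilon> \<le> 1"
    by auto
  define m where "m = nat \<lceil>log 2 (1 / \<epsilon>)\<rceil>"
  have \<delta>: "pi * 20 / 2^m \<le> 80 * \<epsilon>"
    using two_power_ceiling_log_bounds(1)[OF \<epsilon>] pi_less_4 \<epsilon>(1) unfolding m_def[symmetric]
    by (simp add: field_simps)
  show ?case
    unfolding Let_def m_def[symmetric]
  proof (intro exI[of _ "qpe_circuit N l m"] conjI allI impI valid_qpe_circuit qpe_circuit_correct \<delta>)
    show "real (num_queries k (qpe_circuit N l m)) \<le> 4 * real k / \<epsilon>"
      using num_queries_qpe_circuit_le[OF \<epsilon>] by (simp add: m_def)
  qed (auto intro: unitary_mat_oracle_alg)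
qed simp_all

end
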